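(* Let $d\ge 1$ and $\alpha\ge 1$ be integers and $G$ a finite graph. Then $K_{2+\alpha}\star G$ is $(d+\alpha)$-ball packable if and only if $G$ is isomorphic to the minimal-distance graph of some $(d,\tfrac{1}{\alpha+1})$-spherical code.
   Context: For $\theta\in(0,\pi)$, a $(d,\cos\theta)$-spherical code is a finite set of points on the unit sphere $\mathbb S^{d-1}\subset\mathbb R^d$ such that the spherical (angular) distance between any two of its points is at least $\theta$; its minimal-distance graph has the points as vertices, two points adjacent iff their spherical distance equals $\theta$. $K_n$ is the complete graph, $\star$ the graph join. A $D$-ball in $\hat{\mathbb R}^D$ is a closed ball, closed exterior of an open ball with $\infty$, or a closed half-space with $\infty$; a $D$-ball packing is a collection of $D$-balls with disjoint interiors; its tangency graph joins balls meeting in exactly one point; a graph is $D$-ball packable if isomorphic to the tangency graph of some $D$-ball packing. *)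

theory Defs
  imports Complex_Main
begin

type_synonym 'a graph = "'a set \<times> ('a \<Rightarrow> 'a \<Rightarrow> bool)"

definition finite_graph :: "'a graph \<Rightarrow> bool" where
  "finite_graph G \<longleftrightarrow> finite (fst G)
     \<and> (\<forall>u v. snd G u v \<longrightarrow> u \<in> fst G \<and> v \<in> fst G)
     \<and> (\<forall>u v. snd G u v \<longrightarrow> snd G v u)
     \<and> (\<forall>u. \<not> snd G u u)"

definition graph_iso :: "'a graph \<Rightarrow> 'b graph \<Rightarrow> bool" where
  "graph_iso G H \<longleftrightarrow> (\<exists>f. bij_betw f (fst G) (fst H)
     \<and> (\<forall>u\<in>fst G. \<forall>v\<in>fst G. snd G u v \<longleftrightarrow> snd H (f u) (f v)))"

definition complete_graph :: "nat \<Rightarrow> nat graph" where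
  "complete_graph n = ({..<n}, \<lambda>u v. u < n \<and> v < n \<and> u \<noteq> v)"

definition graph_join :: "'a graph \<Rightarrow> 'b graph \<Rightarrow> ('a + 'b) graph" where
  "graph_join G H = (Inl ` fst G \<union> Inr ` fst H,
     \<lambda>x y. (case (x, y) of
        (Inl u, Inl v) \<Rightarrow> snd G u v
      | (Inr u, Inr v) \<Rightarrow> snd H u v
      | (Inl u, Inr v) \<Rightarrow> u \<in> fst G \<and> v \<in> fst H
      | (Inr u, Inl v) \<Rightarrow> u \<in> fst H \<and> v \<in> fst G))"

definition euc :: "nat \<Rightarrow> (nat \<Rightarrow> real) set" where
  "euc n = {x. \<forall>i\<ge>n. x i = 0}"

definition ip :: "nat \<Rightarrow> (nat \<Rightarrow> real) \<Rightarrow> (nat \<Rightarrow> real) \<Rightarrow> real" where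
  "ip n x y = (\<Sum>i<n. x i * y i)"

definition enorm :: "nat \<Rightarrow> (nat \<Rightarrow> real) \<Rightarrow> real" where
  "enorm n x = sqrt (ip n x x)"

definition edist :: "nat \<Rightarrow> (nat \<Rightarrow> real) \<Rightarrow> (nat \<Rightarrow> real) \<Rightarrow> real" where
  "edist n x y = enorm n (\<lambda>i. x i - y i)"

definition unit_sphere :: "nat \<Rightarrow> (nat \<Rightarrow> real) set" where
  "unit_sphere d = {x \<in> euc d. enorm d x = 1}"

definition sph_dist :: "nat \<Rightarrow> (nat \<Rightarrow> real) \<Rightarrow> (nat \<Rightarrow> real) \<Rightarrow> real" where
  "sph_dist d x y = arccos (ip d x y)"

text \<open>A (d, cos theta)-spherical code, 0 < theta < pi.\<close>
definition spherical_code :: "nat \<Rightarrow> real \<Rightarrow> (nat \<Rightarrow> real) set \<Rightarrow> bool" where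
  "spherical_code d \<theta> X \<longleftrightarrow> 0 < \<theta> \<and> \<theta> < pi \<and> finite X \<and> X \<subseteq> unit_sphere d
     \<and> (\<forall>x\<in>X. \<forall>y\<in>X. x \<noteq> y \<longrightarrow> sph_dist d x y \<ge> \<theta>)"

definition min_dist_graph :: "nat \<Rightarrow> real \<Rightarrow> (nat \<Rightarrow> real) set \<Rightarrow> (nat \<Rightarrow> real) graph" where
  "min_dist_graph d \<theta> X = (X, \<lambda>x y. x \<in> X \<and> y \<in> X \<and> x \<noteq> y \<and> sph_dist d x y = \<theta>)"

text \<open>Points of the extended space: Some x for x in R^D, None for the point at infinity.\<close>
type_synonym ext_point = "(nat \<Rightarrow> real) option"

definition ext_space :: "nat \<Rightarrow> ext_point set" where
  "ext_space D = insert None (Some ` euc D)"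

definition is_ball :: "nat \<Rightarrow> ext_point set \<Rightarrow> bool" where
  "is_ball D B \<longleftrightarrow>
     (\<exists>c\<in>euc D. \<exists>r>0. B = Some ` {x \<in> euc D. edist D x c \<le> r})
   \<or> (\<exists>c\<in>euc D. \<exists>r>0. B = insert None (Some ` {x \<in> euc D. edist D x c \<ge> r}))
   \<or> (\<exists>u\<in>euc D. \<exists>t. u \<noteq> (\<lambda>_. 0) \<and> B = insert None (Some ` {x \<in> euc D. ip D u x \<le> t}))"

definition ext_interior :: "nat \<Rightarrow> ext_point set \<Rightarrow> ext_point set" where
  "ext_interior D S =
     Some ` {x \<in> euc D. \<exists>e>0. \<forall>y\<in>euc D. edist D y x < e \<longrightarrow> Some y \<in> S}
   \<union> {p. p = None \<and> None \<in> S \<and> (\<exists>M. \<forall>y\<in>euc D. enorm D y > M \<longrightarrow> Some y \<in> S)}"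

definition ball_packing :: "nat \<Rightarrow> ext_point set set \<Rightarrow> bool" where
  "ball_packing D P \<longleftrightarrow> (\<forall>B\<in>P. is_ball D B)
     \<and> (\<forall>B\<in>P. \<forall>B'\<in>P. B \<noteq> B' \<longrightarrow> ext_interior D B \<inter> ext_interior D B' = {})"

definition tangency_graph :: "ext_point set set \<Rightarrow> ext_point set graph" where
  "tangency_graph P = (P, \<lambda>B B'. B \<in> P \<and> B' \<in> P \<and> B \<noteq> B' \<and> (\<exists>!p. p \<in> B \<inter> B'))"

definition ball_packable :: "nat \<Rightarrow> 'a graph \<Rightarrow> bool" where
  "ball_packable D G \<longleftrightarrow> (\<exists>P. ball_packing D P \<and> graph_iso G (tangency_graph P))"

end

theory Submission
  imports Defs
begin

text \<open>A packing realising \<open>K\<^sub>2\<^sub>+\<^sub>\<alpha> \<star> G\<close> can be normalised by a translation and an inversion so that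
  the balls of two apex vertices become parallel half-spaces touching at infinity. Every other ball
  touches both, so it is a ball of radius \<open>R\<close> centred on the middle hyperplane of the slab. The
  remaining \<open>\<alpha>\<close> apex balls then have centres forming a regular simplex of edge \<open>2R\<close>, and the
  centres of the balls of \<open>G\<close> are at distance \<open>2R\<close> from all its vertices. Projecting away the
  directions of the simplex puts these centres on a sphere in \<open>\<real>\<^sup>d\<close> with inner products
  \<open>1 - \<alpha> |y\<^sub>v - y\<^sub>w|\<^sup>2 / (4R\<^sup>2(\<alpha>+1))\<close>, so disjointness and tangency of the balls become
  \<open>\<langle>x\<^sub>v, x\<^sub>w\<rangle> \<le> 1/(\<alpha>+1)\<close> with equality exactly on edges. The converse reverses the construction.\<close>

lemma ip_sym: "ip n x y = ip n y x"
  by (simp add: ip_def mult.commute)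

lemma ip_add_left: "ip n (\<lambda>i. x i + y i) z = ip n x z + ip n y z"
  by (simp add: ip_def sum.distrib algebra_simps)
lemma ip_add_right: "ip n z (\<lambda>i. x i + y i) = ip n z x + ip n z y"
  by (simp add: ip_def sum.distrib algebra_simps)
lemma ip_diff_left: "ip n (\<lambda>i. x i - y i) z = ip n x z - ip n y z"
  by (simp add: ip_def sum_subtractf algebra_simps)
lemma ip_diff_right: "ip n z (\<lambda>i. x i - y i) = ip n z x - ip n z y"
  by (simp add: ip_def sum_subtractf algebra_simps)
lemma ip_scale_left: "ip n (\<lambda>i. c * x i) z = c * ip n x z"
  by (simp add: ip_def sum_distrib_left algebra_simps)
lemma ip_scale_right: "ip n z (\<lambda>i. c * x i) = c * ip n z x"
  by (simp add: ip_def sum_distrib_left algebra_simps)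
lemma ip_div_left: "ip n (\<lambda>i. x i / c) z = ip n x z / c"
  by (simp add: ip_def sum_divide_distrib)
lemma ip_div_right: "ip n z (\<lambda>i. x i / c) = ip n z x / c"
  by (simp add: ip_def sum_divide_distrib)
lemma ip_neg_left: "ip n (\<lambda>i. - x i) z = - ip n x z"
  by (simp add: ip_def sum_negf)
lemma ip_neg_right: "ip n z (\<lambda>i. - x i) = - ip n z x"
  by (simp add: ip_def sum_negf)
lemma ip_zero_left[simp]: "ip n (\<lambda>i. 0) z = 0"
  by (simp add: ip_def)
lemma ip_zero_right[simp]: "ip n z (\<lambda>i. 0) = 0"
  by (simp add: ip_def)

lemmas ip_lin = ip_add_left ip_add_right ip_diff_left ip_diff_right ip_scale_left ip_scale_right
  ip_neg_left ip_neg_right ip_div_left ip_div_right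

lemma ip_self_nonneg: "0 \<le> ip n x x"
  by (simp add: ip_def sum_nonneg)

lemma ip_self_eq_0_iff: "x \<in> euc n \<Longrightarrow> ip n x x = 0 \<longleftrightarrow> x = (\<lambda>i. 0)"
proof
  assume x: "x \<in> euc n" and h: "ip n x x = 0"
  have "\<forall>i\<in>{..<n}. x i * x i = 0"
    using h by (subst sum_nonneg_eq_0_iff[symmetric]) (auto simp: ip_def)
  then have "\<forall>i<n. x i = 0" by auto
  moreover have "\<forall>i\<ge>n. x i = 0" using x by (auto simp: euc_def)
  ultimately show "x = (\<lambda>i. 0)" by (metis linorder_not_le)
qed (simp)

lemma ip_self_pos: "x \<in> euc D \<Longrightarrow> x \<noteq> (\<lambda>i. 0) \<Longrightarrow> ip D x x > 0"
  using ip_self_eq_0_iff[of x D] ip_self_nonneg[of D x] by simp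

lemma ip_eq_if_euc_left: assumes "x \<in> euc k" "k \<le> n" shows "ip n x y = ip k x y"
proof -
  have "ip n x y = (\<Sum>i\<in>{..<k} \<union> {k..<n}. x i * y i)"
    unfolding ip_def using assms(2) by (intro sum.cong) auto
  also have "\<dots> = ip k x y + (\<Sum>i\<in>{k..<n}. x i * y i)"
    by (subst sum.union_disjoint) (auto simp: ip_def)
  also have "(\<Sum>i\<in>{k..<n}. x i * y i) = 0" using assms(1) by (auto simp: euc_def)
  finally show ?thesis by simp
qed

lemma ip_Suc: "ip (Suc n) x y = ip n x y + x n * y n"
  by (simp add: ip_def)

lemma euc_diff: "x \<in> euc n \<Longrightarrow> y \<in> euc n \<Longrightarrow> (\<lambda>i. x i - y i) \<in> euc n"
  and euc_scale: "x \<in> euc n \<Longrightarrow> (\<lambda>i. c * x i) \<in> euc n"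
  and euc_neg: "x \<in> euc n \<Longrightarrow> (\<lambda>i. - x i) \<in> euc n"
  and euc_zero: "(\<lambda>i. 0) \<in> euc n"
  by (auto simp: euc_def)

lemma ip_Cauchy_Schwarz_sq: "(ip n x y)^2 \<le> ip n x x * ip n y y"
proof -
  define a where "a = ip n x x"
  define b where "b = ip n y y"
  define c where "c = ip n x y"
  have a0: "a \<ge> 0" "b \<ge> 0" using ip_self_nonneg a_def b_def by auto
  have key: "\<And>t. 0 \<le> a * t^2 - 2 * c * t + b"
  proof -
    fix t
    have "0 \<le> ip n (\<lambda>i. t * x i - y i) (\<lambda>i. t * x i - y i)" by (rule ip_self_nonneg)
    also have "\<dots> = a * t^2 - 2 * c * t + b"
      by (simp add: ip_lin a_def b_def c_def ip_sym[of n y x] power2_eq_square algebra_simps)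
    finally show "0 \<le> a * t^2 - 2 * c * t + b" .
  qed
  show ?thesis
  proof (cases "a = 0")
    case True
    have "c = 0"
    proof (rule ccontr)
      assume "c \<noteq> 0"
      have "0 \<le> - 2 * c * ((b + 1) / (2 * c)) + b" using key[of "(b+1)/(2*c)"] True by simp
      also have "\<dots> = -1" using \<open>c \<noteq> 0\<close> by (simp add: field_simps)
      finally show False by simp
    qed
    then show ?thesis using True by (simp add: a_def b_def c_def)
  next
    case False
    then have "a > 0" using a0 by simp
    have "0 \<le> a * (c/a)^2 - 2 * c * (c/a) + b" by (rule key)
    also have "\<dots> = (a*b - c^2)/a" using \<open>a>0\<close> by (simp add: field_simps power2_eq_square)
    finally have "0 \<le> a*b - c^2" using \<open>a>0\<close> by (simp add: zero_le_divide_iff)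
    then show ?thesis by (simp add: a_def b_def c_def)
  qed
qed

lemma ip_le_sqrt_mult: "ip n x y \<le> sqrt (ip n x x) * sqrt (ip n y y)"
proof -
  have "\<bar>ip n x y\<bar> \<le> sqrt (ip n x x * ip n y y)"
    using ip_Cauchy_Schwarz_sq[of n x y] by (simp add: real_le_rsqrt)
  then show ?thesis by (simp add: real_sqrt_mult)
qed

lemma abs_ip_le_sqrt_mult: "\<bar>ip n x y\<bar> \<le> sqrt (ip n x x) * sqrt (ip n y y)"
  using ip_Cauchy_Schwarz_sq[of n x y] by (simp add: real_le_rsqrt real_sqrt_mult[symmetric])

definition unit_vec :: "nat \<Rightarrow> nat \<Rightarrow> real" where "unit_vec m = (\<lambda>i. if i = m then 1 else 0)"

lemma ip_unit_vec_right: "ip n x (unit_vec m) = (if m < n then x m else 0)"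
  by (simp add: ip_def unit_vec_def if_distrib[of "\<lambda>t. x _ * t"] sum.delta cong: if_cong)
lemma ip_unit_vec_left: "ip n (unit_vec m) x = (if m < n then x m else 0)"
  by (simp add: ip_sym ip_unit_vec_right)

lemma ip_unit_vec_unit_vec: "ip n (unit_vec i) (unit_vec j) = (if i = j \<and> i < n then 1 else 0)"
  unfolding ip_unit_vec_left by (simp add: unit_vec_def)

section \<open>Balls as quadratic inequalities\<close>

text \<open>Every ball is \<open>{x. a |x|\<^sup>2 - 2 \<langle>b, x\<rangle> + c \<le> 0}\<close>, containing \<open>\<infinity>\<close> iff \<open>a \<le> 0\<close>, for coefficients
  with \<open>|b|\<^sup>2 > a c\<close>; translations act affinely on \<open>(a, b, c)\<close> and the inversion \<open>x \<mapsto> x / |x|\<^sup>2\<close>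
  swaps \<open>a\<close> and \<open>c\<close>.\<close>

definition qform :: "nat \<Rightarrow> real \<Rightarrow> (nat \<Rightarrow> real) \<Rightarrow> real \<Rightarrow> (nat \<Rightarrow> real) \<Rightarrow> real" where
  "qform D a b c x = a * ip D x x - 2 * ip D b x + c"

definition qball :: "nat \<Rightarrow> real \<Rightarrow> (nat \<Rightarrow> real) \<Rightarrow> real \<Rightarrow> ext_point set" where
  "qball D a b c = Some ` {x \<in> euc D. qform D a b c x \<le> 0} \<union> (if a \<le> 0 then {None} else {})"

definition qball_int :: "nat \<Rightarrow> real \<Rightarrow> (nat \<Rightarrow> real) \<Rightarrow> real \<Rightarrow> ext_point set" where
  "qball_int D a b c = Some ` {x \<in> euc D. qform D a b c x < 0} \<union> (if a < 0 then {None} else {})"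

definition nondegenerate :: "nat \<Rightarrow> real \<Rightarrow> (nat \<Rightarrow> real) \<Rightarrow> real \<Rightarrow> bool" where
  "nondegenerate D a b c \<longleftrightarrow> b \<in> euc D \<and> ip D b b - a * c > 0"

lemma Some_in_qball: "Some x \<in> qball D a b c \<longleftrightarrow> x \<in> euc D \<and> qform D a b c x \<le> 0"
  by (auto simp: qball_def)
lemma None_in_qball: "None \<in> qball D a b c \<longleftrightarrow> a \<le> 0"
  by (auto simp: qball_def)
lemma Some_in_qball_int: "Some x \<in> qball_int D a b c \<longleftrightarrow> x \<in> euc D \<and> qform D a b c x < 0"
  by (auto simp: qball_int_def)
lemma None_in_qball_int: "None \<in> qball_int D a b c \<longleftrightarrow> a < 0"
  by (auto simp: qball_int_def)
lemma qball_subset_ext_space: "qball D a b c \<subseteq> ext_space D"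
  by (auto simp: qball_def ext_space_def)
lemma qball_int_subset_qball: "qball_int D a b c \<subseteq> qball D a b c"
  by (auto simp: qball_def qball_int_def)

lemma ip_diff_self: "ip n (\<lambda>i. x i - y i) (\<lambda>i. x i - y i) = ip n x x - 2 * ip n x y + ip n y y"
  by (simp add: ip_lin ip_sym[of n y x])

lemma edist_le_iff_ip: "r > 0 \<Longrightarrow> edist D x y \<le> r \<longleftrightarrow> ip D (\<lambda>i. x i - y i) (\<lambda>i. x i - y i) \<le> r^2"
proof -
  assume r: "r > 0"
  have "r = sqrt (r^2)" using r by simp
  then show ?thesis unfolding edist_def enorm_def by (metis real_sqrt_le_iff)
qed

lemma edist_ge_iff_ip: "r > 0 \<Longrightarrow> edist D x y \<ge> r \<longleftrightarrow> ip D (\<lambda>i. x i - y i) (\<lambda>i. x i - y i) \<ge> r^2"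
proof -
  assume r: "r > 0"
  have "r = sqrt (r^2)" using r by simp
  then show ?thesis unfolding edist_def enorm_def by (metis real_sqrt_le_iff)
qed

lemma qform_ball: "qform D 1 cc (ip D cc cc - r^2) x = ip D (\<lambda>i. x i - cc i) (\<lambda>i. x i - cc i) - r^2"
  by (simp add: qform_def ip_diff_self ip_sym[of D cc x])

lemma qform_ball_exterior: "qform D (-1) (\<lambda>i. - cc i) (r^2 - ip D cc cc) x = r^2 - ip D (\<lambda>i. x i - cc i) (\<lambda>i. x i - cc i)"
  by (simp add: qform_def ip_diff_self ip_sym[of D cc x] ip_lin)

lemma qform_halfspace: "qform D 0 (\<lambda>i. - u i / 2) (-t) x = ip D u x - t"
  by (simp add: qform_def ip_lin)

lemma is_ball_imp_qball:
  assumes "is_ball D B" shows "\<exists>a b c. nondegenerate D a b c \<and> B = qball D a b c"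
  using assms unfolding is_ball_def
proof (elim disjE)
  assume "\<exists>c\<in>euc D. \<exists>r>0. B = Some ` {x \<in> euc D. edist D x c \<le> r}"
  then obtain cc r where cc: "cc \<in> euc D" and r: "r > 0" and B: "B = Some ` {x \<in> euc D. edist D x cc \<le> r}"
    by blast
  have n1: "nondegenerate D 1 cc (ip D cc cc - r^2)" using cc r by (simp add: nondegenerate_def)
  have "{x \<in> euc D. edist D x cc \<le> r} = {x \<in> euc D. qform D 1 cc (ip D cc cc - r^2) x \<le> 0}"
    using r by (simp add: qform_ball edist_le_iff_ip)
  then have "B = qball D 1 cc (ip D cc cc - r^2)"
    unfolding B qball_def by simp
  with n1 show ?thesis by (intro exI[of _ 1] exI[of _ cc] exI[of _ "ip D cc cc - r^2"] conjI)
next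
  assume "\<exists>c\<in>euc D. \<exists>r>0. B = insert None (Some ` {x \<in> euc D. edist D x c \<ge> r})"
  then obtain cc r where cc: "cc \<in> euc D" and r: "r > 0" and B: "B = insert None (Some ` {x \<in> euc D. edist D x cc \<ge> r})"
    by blast
  have n1: "nondegenerate D (-1) (\<lambda>i. - cc i) (r^2 - ip D cc cc)" using cc r by (simp add: nondegenerate_def ip_lin euc_neg)
  have "{x \<in> euc D. edist D x cc \<ge> r} = {x \<in> euc D. qform D (-1) (\<lambda>i. - cc i) (r^2 - ip D cc cc) x \<le> 0}"
    using r by (simp add: qform_ball_exterior edist_ge_iff_ip)
  then have "B = qball D (-1) (\<lambda>i. - cc i) (r^2 - ip D cc cc)"
    unfolding B qball_def by simp
  with n1 show ?thesis by (intro exI[of _ "-1"] exI[of _ "\<lambda>i. - cc i"] exI[of _ "r^2 - ip D cc cc"] conjI)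
next
  assume "\<exists>u\<in>euc D. \<exists>t. u \<noteq> (\<lambda>_. 0) \<and> B = insert None (Some ` {x \<in> euc D. ip D u x \<le> t})"
  then obtain u t where u: "u \<in> euc D" "u \<noteq> (\<lambda>_. 0)" and B: "B = insert None (Some ` {x \<in> euc D. ip D u x \<le> t})"
    by blast
  have "ip D u u \<noteq> 0" using ip_self_eq_0_iff[OF u(1)] u(2) by simp
  then have "ip D u u > 0" using ip_self_nonneg[of D u] by simp
  then have n1: "nondegenerate D 0 (\<lambda>i. - u i / 2) (-t)" using u by (simp add: nondegenerate_def ip_lin euc_def)
  have "{x \<in> euc D. ip D u x \<le> t} = {x \<in> euc D. qform D 0 (\<lambda>i. - u i / 2) (-t) x \<le> 0}"
    unfolding qform_halfspace by simp
  then have "B = qball D 0 (\<lambda>i. - u i / 2) (-t)"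
    unfolding B qball_def by simp
  with n1 show ?thesis by (intro exI[of _ "0"] exI[of _ "\<lambda>i. - u i / 2"] exI[of _ "-t"] conjI)
qed

lemma enorm_power2: "enorm D x ^ 2 = ip D x x"
  using ip_self_nonneg[of D x] by (simp add: enorm_def)
lemma enorm_nonneg: "enorm D x \<ge> 0"
  using ip_self_nonneg[of D x] by (simp add: enorm_def)

lemma qform_add: "qform D a b c (\<lambda>i. x i + h i) = qform D a b c x + 2 * ip D (\<lambda>i. a * x i - b i) h + a * ip D h h"
  by (simp add: qform_def ip_lin ip_sym[of D h x] algebra_simps)

lemma ip_le_enorm_mult: "ip D x y \<le> enorm D x * enorm D y"
  unfolding enorm_def by (rule ip_le_sqrt_mult)
lemma abs_ip_le_enorm_mult: "\<bar>ip D x y\<bar> \<le> enorm D x * enorm D y"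
  unfolding enorm_def by (rule abs_ip_le_sqrt_mult)

lemma enorm_scaleR: "enorm D (\<lambda>i. t * x i) = \<bar>t\<bar> * enorm D x"
proof -
  have "ip D (\<lambda>i. t * x i) (\<lambda>i. t * x i) = t^2 * ip D x x" by (simp add: ip_lin power2_eq_square)
  then show ?thesis unfolding enorm_def by (simp add: real_sqrt_mult)
qed

lemma qform_add_le:
  assumes "enorm D h \<le> 1"
  shows "qform D a b c (\<lambda>i. x i + h i)
    \<le> qform D a b c x + (2 * enorm D (\<lambda>i. a * x i - b i) + \<bar>a\<bar>) * enorm D h"
proof -
  define w where "w = (\<lambda>i. a * x i - b i)"
  define H where "H = enorm D h"
  have H: "0 \<le> H" "H \<le> 1" using assms by (simp_all add: H_def enorm_nonneg)
  have hh: "ip D h h = H * H" using enorm_power2[of D h] by (simp add: H_def power2_eq_square)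
  have "qform D a b c (\<lambda>i. x i + h i) = qform D a b c x + 2 * ip D w h + a * ip D h h"
    unfolding qform_add w_def ..
  also have "\<dots> \<le> qform D a b c x + 2 * (enorm D w * H) + \<bar>a\<bar> * (H * H)"
    using ip_le_enorm_mult[of D w h] mult_right_mono[OF abs_ge_self[of a] ip_self_nonneg[of D h]]
    by (simp add: H_def hh)
  also have "\<dots> \<le> qform D a b c x + 2 * (enorm D w * H) + \<bar>a\<bar> * H"
    using mult_left_mono[OF mult_left_le[OF H(2,1)] abs_ge_zero[of a]] by simp
  finally show ?thesis by (simp add: w_def H_def algebra_simps)
qed

lemma interior_point_qball_if_neg:
  assumes neg: "qform D a b c x < 0"
  shows "\<exists>e>0. \<forall>y\<in>euc D. edist D y x < e \<longrightarrow> Some y \<in> qball D a b c"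
proof -
  define K where "K = 2 * enorm D (\<lambda>i. a * x i - b i) + \<bar>a\<bar> + 1"
  have K0: "K > 0" using enorm_nonneg by (simp add: K_def add_nonneg_pos)
  define e where "e = min 1 (- qform D a b c x / K)"
  have e0: "e > 0" using neg K0 by (simp add: e_def divide_neg_pos)
  have "Some y \<in> qball D a b c" if y: "y \<in> euc D" "edist D y x < e" for y
  proof -
    define h where "h = (\<lambda>i. y i - x i)"
    have H: "enorm D h < e" "enorm D h \<ge> 0" using y by (simp_all add: h_def edist_def enorm_nonneg)
    have "qform D a b c y \<le> qform D a b c x + (K - 1) * enorm D h"
      using qform_add_le[of D h a b c x] H unfolding e_def K_def h_def by simp
    also have "\<dots> \<le> qform D a b c x + K * e"
    proof -
      have "K * enorm D h \<le> K * e" using H K0 by simp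
      then show ?thesis using H(2) by (simp add: algebra_simps)
    qed
    also have "K * e \<le> K * (- qform D a b c x / K)" using K0 by (intro mult_left_mono) (auto simp: e_def)
    also have "\<dots> = - qform D a b c x" using K0 by simp
    finally show ?thesis using y by (simp add: Some_in_qball)
  qed
  then show ?thesis using e0 by blast
qed

lemma qform_along_gradient:
  "qform D a b c (\<lambda>i. x i + t * (a * x i - b i)) = qform D a b c x
     + t * ip D (\<lambda>i. a * x i - b i) (\<lambda>i. a * x i - b i) * (2 + a * t)"
  unfolding qform_add by (simp add: ip_lin algebra_simps)

text \<open>Conversely, at a boundary point the quadratic increases along its gradient \<open>a x - b\<close>,
  which vanishes only for degenerate coefficients.\<close>

lemma qform_neg_if_interior_point:
  assumes nd: "nondegenerate D a b c" and x: "x \<in> euc D"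
    and e0: "e > 0" and e: "\<And>y. y \<in> euc D \<Longrightarrow> edist D y x < e \<Longrightarrow> Some y \<in> qball D a b c"
  shows "qform D a b c x < 0"
proof (rule ccontr)
  assume "\<not> qform D a b c x < 0"
  moreover have "qform D a b c x \<le> 0" using e[OF x] e0 x by (simp add: edist_def enorm_def Some_in_qball)
  ultimately have F0: "qform D a b c x = 0" by simp
  define w where "w = (\<lambda>i. a * x i - b i)"
  have we: "w \<in> euc D" using x nd by (auto simp: w_def euc_def nondegenerate_def)
  have "w \<noteq> (\<lambda>i. 0)"
  proof
    assume "w = (\<lambda>i. 0)"
    then have "b = (\<lambda>i. a * x i)" unfolding w_def by (simp add: fun_eq_iff)
    then have "ip D b b - a * c = - a * qform D a b c x" by (simp add: qform_def ip_lin algebra_simps)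
    then show False using F0 nd by (simp add: nondegenerate_def)
  qed
  then have ww: "ip D w w > 0" using ip_self_pos[OF we] by simp
  define W where "W = enorm D w"
  have W0: "W > 0" using ww by (simp add: W_def enorm_def)
  define t where "t = min (e / (2 * W)) (1 / (\<bar>a\<bar> + 1))"
  have t0: "t > 0" using e0 W0 by (simp add: t_def)
  have "\<bar>a\<bar> * t \<le> \<bar>a\<bar> * (1 / (\<bar>a\<bar> + 1))" by (intro mult_left_mono) (auto simp: t_def)
  also have "\<dots> < 1" by simp
  finally have "\<bar>a * t\<bar> < 1" using t0 by (simp add: abs_mult)
  then have t1: "2 + a * t > 0" by linarith
  have "t \<le> e / (2 * W)" by (simp add: t_def)
  then have "t * W \<le> e / 2" using W0 by (simp add: field_simps)
  define y where "y = (\<lambda>i. x i + t * w i)"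
  have ye: "y \<in> euc D" using x we by (auto simp: y_def euc_def)
  have "edist D y x = t * W"
    using t0 enorm_scaleR[of D t w] by (simp add: y_def edist_def W_def)
  then have "qform D a b c y \<le> 0" using e[OF ye] e0 \<open>t * W \<le> e / 2\<close> by (simp add: Some_in_qball)
  moreover have "qform D a b c y = t * ip D w w * (2 + a * t)"
    using qform_along_gradient[of D a b c x t] F0 by (simp add: y_def w_def)
  ultimately show False using t0 ww t1 by (metis mult_pos_pos not_le)
qed

lemma qform_neg_far:
  assumes a: "a < 0"
  shows "\<exists>M. \<forall>y. enorm D y > M \<longrightarrow> qform D a b c y < 0"
proof -
  define B where "B = enorm D b"
  have B0: "B \<ge> 0" by (simp add: B_def enorm_nonneg)
  define M where "M = (2 * B + \<bar>c\<bar> + 1) / (- a) + 1"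
  have "\<forall>y. enorm D y > M \<longrightarrow> qform D a b c y < 0"
  proof (intro allI impI)
    fix y assume R: "enorm D y > M"
    define R where "R = enorm D y"
    have RM: "R > M" using R by (simp add: R_def)
    have M1: "M \<ge> 1" using a B0 by (simp add: M_def divide_nonneg_neg)
    have R1: "R \<ge> 1" using RM M1 by simp
    have "a * R < a * M" using a RM by simp
    also have "a * M = - (2 * B + \<bar>c\<bar> + 1) + a" using a by (simp add: M_def field_simps)
    finally have aR: "a * R + 2 * B + \<bar>c\<bar> < 0" using a by simp
    have "qform D a b c y = a * R^2 - 2 * ip D b y + c"
      by (simp add: qform_def R_def enorm_power2)
    also have "\<dots> \<le> a * R^2 + 2 * (B * R) + \<bar>c\<bar> * R"
    proof -
      have "- ip D b y \<le> B * R" using abs_ip_le_enorm_mult[of D b y] by (simp add: B_def R_def)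
      moreover have "c \<le> \<bar>c\<bar> * R"
      proof -
        have "\<bar>c\<bar> * 1 \<le> \<bar>c\<bar> * R" using R1 by (intro mult_left_mono) auto
        then show ?thesis by simp
      qed
      ultimately show ?thesis by simp
    qed
    also have "\<dots> = R * (a * R + 2 * B + \<bar>c\<bar>)" by (simp add: power2_eq_square algebra_simps)
    also have "\<dots> < 0" using aR R1 by (simp add: mult_pos_neg)
    finally show "qform D a b c y < 0" .
  qed
  then show ?thesis by blast
qed

lemma halfspace_qform_neg_far:
  assumes nd: "nondegenerate D 0 b c"
  shows "\<exists>y\<in>euc D. M < enorm D y \<and> qform D 0 b c y < 0"
proof -
  have bb: "ip D b b > 0" and be: "b \<in> euc D" using nd by (simp_all add: nondegenerate_def)
  define B where "B = enorm D b"
  have B0: "B > 0" using bb by (simp add: B_def enorm_def)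
  define t where "t = (\<bar>c\<bar> + 1) / ip D b b + (\<bar>M\<bar> + 1) / B"
  have t0: "t > 0" using bb B0 by (simp add: t_def add_pos_pos)
  define y where "y = (\<lambda>i. t * b i)"
  have "enorm D y = t * B" using t0 by (simp add: y_def enorm_scaleR B_def)
  also have "\<dots> = (\<bar>c\<bar> + 1) / ip D b b * B + (\<bar>M\<bar> + 1)" using B0 by (simp add: t_def field_simps)
  finally have "enorm D y = (\<bar>c\<bar> + 1) / ip D b b * B + (\<bar>M\<bar> + 1)" .
  moreover have "(\<bar>c\<bar> + 1) / ip D b b * B \<ge> 0" using bb B0 by simp
  ultimately have far: "M < enorm D y" by linarith
  have "t * ip D b b = \<bar>c\<bar> + 1 + (\<bar>M\<bar> + 1) / B * ip D b b" using bb by (simp add: t_def field_simps)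
  moreover have "(\<bar>M\<bar> + 1) / B * ip D b b \<ge> 0" using bb B0 by simp
  moreover have "qform D 0 b c y = c - 2 * (t * ip D b b)" by (simp add: qform_def y_def ip_lin)
  ultimately have "qform D 0 b c y < 0" by linarith
  moreover have "y \<in> euc D" using be by (simp add: y_def euc_scale)
  ultimately show ?thesis using far by blast
qed

lemma interior_infinity_qball_iff:
  assumes nd: "nondegenerate D a b c"
  shows "(None \<in> qball D a b c \<and> (\<exists>M. \<forall>y\<in>euc D. enorm D y > M \<longrightarrow> Some y \<in> qball D a b c)) \<longleftrightarrow> a < 0"
proof -
  consider "a < 0" | "a = 0" | "a > 0" by linarith
  then show ?thesis
  proof cases
    case 1
    then obtain M where "\<And>y. enorm D y > M \<Longrightarrow> qform D a b c y < 0" using qform_neg_far by blast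
    then show ?thesis using 1 by (auto simp: None_in_qball Some_in_qball intro!: exI[of _ M] less_imp_le)
  next
    case 2
    have "nondegenerate D 0 (\<lambda>i. - b i) (- c)" using nd 2 by (simp add: nondegenerate_def euc_neg ip_lin)
    then have "\<exists>y\<in>euc D. M < enorm D y \<and> qform D a b c y > 0" for M
      using halfspace_qform_neg_far[of D "\<lambda>i. - b i" "- c" M] 2 by (simp add: qform_def ip_lin)
    then show ?thesis using 2 by (force simp: Some_in_qball)
  next
    case 3
    then show ?thesis by (simp add: None_in_qball)
  qed
qed

lemma ext_interior_qball:
  assumes nd: "nondegenerate D a b c"
  shows "ext_interior D (qball D a b c) = qball_int D a b c"
proof -
  have A: "{x \<in> euc D. \<exists>e>0. \<forall>y\<in>euc D. edist D y x < e \<longrightarrow> Some y \<in> qball D a b c}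
      = {x \<in> euc D. qform D a b c x < 0}"
    using interior_point_qball_if_neg qform_neg_if_interior_point[OF nd] by blast
  have B: "{p. p = None \<and> None \<in> qball D a b c \<and> (\<exists>M. \<forall>y\<in>euc D. enorm D y > M \<longrightarrow> Some y \<in> qball D a b c)}
      = (if a < 0 then {None} else {})"
    using interior_infinity_qball_iff[OF nd] by auto
  show ?thesis unfolding ext_interior_def A B qball_int_def ..
qed

lemma qform_complete_square:
  assumes "a \<noteq> 0"
  shows "qform D a b c x = a * (ip D (\<lambda>i. x i - b i / a) (\<lambda>i. x i - b i / a) - (ip D b b - a * c) / a^2)"
  using assms by (simp add: qform_def ip_diff_self ip_lin ip_sym[of D x b] field_simps power2_eq_square)

lemma qball_is_ball:
  assumes nd: "nondegenerate D a b c" shows "is_ball D (qball D a b c)"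
proof -
  have be: "b \<in> euc D" and disc: "ip D b b - a * c > 0" using nd by (auto simp: nondegenerate_def)
  define cc where "cc = (\<lambda>i. b i / a)"
  have cce: "cc \<in> euc D" using be by (auto simp: cc_def euc_def)
  consider "a > 0" | "a < 0" | "a = 0" by linarith
  then show ?thesis
  proof cases
    case 1
    define r where "r = sqrt (ip D b b - a * c) / a"
    have r0: "r > 0" using 1 disc by (simp add: r_def)
    have r2: "r^2 = (ip D b b - a * c) / a^2" using disc by (simp add: r_def power_divide)
    have "{x \<in> euc D. qform D a b c x \<le> 0} = {x \<in> euc D. edist D x cc \<le> r}"
      using 1 r0 by (simp add: qform_complete_square edist_le_iff_ip r2 cc_def mult_le_0_iff)
    then have "qball D a b c = Some ` {x \<in> euc D. edist D x cc \<le> r}"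
      unfolding qball_def using 1 by simp
    then show ?thesis unfolding is_ball_def using cce r0 by blast
  next
    case 2
    define r where "r = sqrt (ip D b b - a * c) / (- a)"
    have r0: "r > 0" using 2 disc by (simp add: r_def divide_pos_neg)
    have r2: "r^2 = (ip D b b - a * c) / a^2" using disc by (simp add: r_def power_divide)
    have "{x \<in> euc D. qform D a b c x \<le> 0} = {x \<in> euc D. edist D x cc \<ge> r}"
      using 2 r0 by (simp add: qform_complete_square edist_ge_iff_ip r2 cc_def mult_le_0_iff)
    then have "qball D a b c = insert None (Some ` {x \<in> euc D. edist D x cc \<ge> r})"
      unfolding qball_def using 2 by auto
    then show ?thesis unfolding is_ball_def using cce r0 by blast
  next
    case 3
    define u where "u = (\<lambda>i. -2 * b i)"
    have ue: "u \<in> euc D" using be by (auto simp: u_def euc_def)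
    have un: "u \<noteq> (\<lambda>_. 0)"
    proof
      assume "u = (\<lambda>_. 0)"
      then have "b = (\<lambda>_. 0)" by (auto simp: u_def fun_eq_iff)
      then show False using disc 3 by simp
    qed
    have "{x \<in> euc D. qform D a b c x \<le> 0} = {x \<in> euc D. ip D u x \<le> - c}"
      using 3 by (auto simp: qform_def u_def ip_lin)
    then have "qball D a b c = insert None (Some ` {x \<in> euc D. ip D u x \<le> - c})"
      unfolding qball_def using 3 by auto
    then show ?thesis unfolding is_ball_def using ue un by blast
  qed
qed

section \<open>Normalising a packing by a translation and an inversion\<close>

lemma image_eq_by_inverse:
  assumes "\<forall>w\<in>U. \<Psi> w \<in> U" "\<forall>w\<in>U. \<Psi>' w \<in> U" "\<forall>w\<in>U. \<Psi> (\<Psi>' w) = w"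
    "S \<subseteq> U" "S' \<subseteq> U" "\<forall>w\<in>U. \<Psi> w \<in> S' \<longleftrightarrow> w \<in> S"
  shows "S' = \<Psi> ` S"
proof
  show "\<Psi> ` S \<subseteq> S'" using assms by blast
  show "S' \<subseteq> \<Psi> ` S"
  proof
    fix z assume z: "z \<in> S'"
    then have "z \<in> U" using assms by blast
    then have "\<Psi>' z \<in> S" using assms z by metis
    moreover have "z = \<Psi> (\<Psi>' z)" using assms \<open>z \<in> U\<close> by metis
    ultimately show "z \<in> \<Psi> ` S" by blast
  qed
qed

definition translate_ext :: "(nat \<Rightarrow> real) \<Rightarrow> ext_point \<Rightarrow> ext_point" where
  "translate_ext q = map_option (\<lambda>x i. x i - q i)"

lemma qform_translate: "qform D a (\<lambda>i. b i - a * q i) (a * ip D q q - 2 * ip D b q + c) (\<lambda>i. x i - q i) = qform D a b c x"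
  by (simp add: qform_def ip_lin ip_sym[of D q x] ip_sym[of D q b] algebra_simps)

lemma translate_ext_props:
  assumes q: "q \<in> euc D"
  shows "\<forall>w\<in>ext_space D. translate_ext q w \<in> ext_space D"
    "\<forall>w\<in>ext_space D. translate_ext (\<lambda>i. - q i) w \<in> ext_space D"
    "\<forall>w\<in>ext_space D. translate_ext q (translate_ext (\<lambda>i. - q i) w) = w"
  using q by (auto simp: translate_ext_def ext_space_def euc_def option.map_comp o_def)

lemma qball_translate:
  assumes q: "q \<in> euc D"
  shows "qball D a (\<lambda>i. b i - a * q i) (a * ip D q q - 2 * ip D b q + c) = translate_ext q ` qball D a b c"
proof (rule image_eq_by_inverse[OF translate_ext_props[OF q] qball_subset_ext_space qball_subset_ext_space], intro ballI)
  fix w assume "w \<in> ext_space D"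
  then show "(translate_ext q w \<in> qball D a (\<lambda>i. b i - a * q i) (a * ip D q q - 2 * ip D b q + c)) = (w \<in> qball D a b c)"
    using q by (auto simp: ext_space_def translate_ext_def Some_in_qball None_in_qball qform_translate euc_def)
qed

lemma qball_int_translate:
  assumes q: "q \<in> euc D"
  shows "qball_int D a (\<lambda>i. b i - a * q i) (a * ip D q q - 2 * ip D b q + c) = translate_ext q ` qball_int D a b c"
proof (rule image_eq_by_inverse[OF translate_ext_props[OF q]
    subset_trans[OF qball_int_subset_qball qball_subset_ext_space]
    subset_trans[OF qball_int_subset_qball qball_subset_ext_space]], intro ballI)
  fix w assume "w \<in> ext_space D"
  then show "(translate_ext q w \<in> qball_int D a (\<lambda>i. b i - a * q i) (a * ip D q q - 2 * ip D b q + c)) = (w \<in> qball_int D a b c)"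
    using q by (auto simp: ext_space_def translate_ext_def Some_in_qball_int None_in_qball_int qform_translate euc_def)
qed

lemma nondegenerate_translate:
  assumes q: "q \<in> euc D" and nd: "nondegenerate D a b c"
  shows "nondegenerate D a (\<lambda>i. b i - a * q i) (a * ip D q q - 2 * ip D b q + c)"
  using assms unfolding nondegenerate_def
  by (auto simp: ip_lin ip_sym[of D q b] euc_def algebra_simps)

definition invert_ext :: "nat \<Rightarrow> ext_point \<Rightarrow> ext_point" where
  "invert_ext D w = (case w of None \<Rightarrow> Some (\<lambda>i. 0)
     | Some x \<Rightarrow> if x = (\<lambda>i. 0) then None else Some (\<lambda>i. x i / ip D x x))"

lemma invert_ext_props:
  shows "\<forall>w\<in>ext_space D. invert_ext D w \<in> ext_space D"
    "\<forall>w\<in>ext_space D. invert_ext D (invert_ext D w) = w"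
proof -
  show "\<forall>w\<in>ext_space D. invert_ext D w \<in> ext_space D"
    by (auto simp: invert_ext_def ext_space_def euc_def split: option.splits)
  show "\<forall>w\<in>ext_space D. invert_ext D (invert_ext D w) = w"
  proof
    fix w assume w: "w \<in> ext_space D"
    show "invert_ext D (invert_ext D w) = w"
    proof (cases w)
      case None then show ?thesis by (simp add: invert_ext_def)
    next
      case (Some x)
      then have x: "x \<in> euc D" using w by (auto simp: ext_space_def)
      show ?thesis
      proof (cases "x = (\<lambda>i. 0)")
        case True then show ?thesis using Some by (simp add: invert_ext_def)
      next
        case False
        have p: "ip D x x > 0" using ip_self_pos[OF x False] .
        define y where "y = (\<lambda>i. x i / ip D x x)"
        have yy: "ip D y y = 1 / ip D x x" using p by (simp add: y_def ip_lin power2_eq_square)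
        have yn: "y \<noteq> (\<lambda>i. 0)" using yy p by auto
        have "(\<lambda>i. y i / ip D y y) = x" unfolding yy using p by (simp add: y_def)
        then show ?thesis using Some False yn by (simp add: invert_ext_def y_def[symmetric])
      qed
    qed
  qed
qed

lemma qform_invert:
  assumes "ip D x x > 0"
  shows "qform D c b a (\<lambda>i. x i / ip D x x) = qform D a b c x / ip D x x"
  using assms by (simp add: qform_def ip_lin field_simps power2_eq_square)

lemma invert_ext_mem_iff:
  assumes w: "w \<in> ext_space D"
  shows "invert_ext D w \<in> qball D c b a \<longleftrightarrow> w \<in> qball D a b c"
    "invert_ext D w \<in> qball_int D c b a \<longleftrightarrow> w \<in> qball_int D a b c"
proof -
  have z: "(\<lambda>i. 0::real) \<in> euc D" by (simp add: euc_def)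
  have "(invert_ext D w \<in> qball D c b a \<longleftrightarrow> w \<in> qball D a b c) \<and> (invert_ext D w \<in> qball_int D c b a \<longleftrightarrow> w \<in> qball_int D a b c)"
  proof (cases w)
    case None then show ?thesis using z by (simp add: invert_ext_def Some_in_qball None_in_qball Some_in_qball_int None_in_qball_int qform_def)
  next
    case (Some x)
    then have x: "x \<in> euc D" using w by (auto simp: ext_space_def)
    show ?thesis
    proof (cases "x = (\<lambda>i. 0)")
      case True then show ?thesis using Some z by (simp add: invert_ext_def Some_in_qball None_in_qball Some_in_qball_int None_in_qball_int qform_def)
    next
      case False
      have p: "ip D x x > 0" using ip_self_pos[OF x False] .
      have ye: "(\<lambda>i. x i / ip D x x) \<in> euc D" using x by (auto simp: euc_def)
      show ?thesis using Some False p x ye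
        by (simp add: invert_ext_def Some_in_qball Some_in_qball_int qform_invert divide_le_0_iff divide_less_0_iff)
    qed
  qed
  then show "invert_ext D w \<in> qball D c b a \<longleftrightarrow> w \<in> qball D a b c"
    "invert_ext D w \<in> qball_int D c b a \<longleftrightarrow> w \<in> qball_int D a b c" by auto
qed

lemma qball_invert: "qball D c b a = invert_ext D ` qball D a b c"
  by (rule image_eq_by_inverse[OF invert_ext_props(1) invert_ext_props(1) invert_ext_props(2) qball_subset_ext_space qball_subset_ext_space])
     (simp add: invert_ext_mem_iff)

lemma qball_int_invert: "qball_int D c b a = invert_ext D ` qball_int D a b c"
  by (rule image_eq_by_inverse[OF invert_ext_props(1) invert_ext_props(1) invert_ext_props(2)
      subset_trans[OF qball_int_subset_qball qball_subset_ext_space] subset_trans[OF qball_int_subset_qball qball_subset_ext_space]])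
     (simp add: invert_ext_mem_iff)

lemma nondegenerate_invert: "nondegenerate D a b c \<Longrightarrow> nondegenerate D c b a"
  by (simp add: nondegenerate_def mult.commute)

type_synonym qcoords = "real \<times> (nat \<Rightarrow> real) \<times> real"

definition qball_of :: "nat \<Rightarrow> qcoords \<Rightarrow> ext_point set" where "qball_of D p = (case p of (a,b,c) \<Rightarrow> qball D a b c)"
definition qball_int_of :: "nat \<Rightarrow> qcoords \<Rightarrow> ext_point set" where "qball_int_of D p = (case p of (a,b,c) \<Rightarrow> qball_int D a b c)"
definition nondeg_coords :: "nat \<Rightarrow> qcoords \<Rightarrow> bool" where "nondeg_coords D p = (case p of (a,b,c) \<Rightarrow> nondegenerate D a b c)"
definition translate_coords :: "nat \<Rightarrow> (nat \<Rightarrow> real) \<Rightarrow> qcoords \<Rightarrow> qcoords" where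
  "translate_coords D q p = (case p of (a,b,c) \<Rightarrow> (a, \<lambda>i. b i - a * q i, a * ip D q q - 2 * ip D b q + c))"
definition invert_coords :: "qcoords \<Rightarrow> qcoords" where "invert_coords p = (case p of (a,b,c) \<Rightarrow> (c,b,a))"

definition ball_config :: "nat \<Rightarrow> 'v set \<Rightarrow> ('v \<Rightarrow> 'v \<Rightarrow> bool) \<Rightarrow> ('v \<Rightarrow> qcoords) \<Rightarrow> bool" where
  "ball_config D V adj \<rho> \<longleftrightarrow> (\<forall>v\<in>V. nondeg_coords D (\<rho> v)) \<and>
    (\<forall>u\<in>V. \<forall>v\<in>V. u \<noteq> v \<longrightarrow> qball_of D (\<rho> u) \<noteq> qball_of D (\<rho> v) \<and> qball_int_of D (\<rho> u) \<inter> qball_int_of D (\<rho> v) = {}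
        \<and> (adj u v \<longleftrightarrow> (\<exists>!z. z \<in> qball_of D (\<rho> u) \<inter> qball_of D (\<rho> v))))"

lemma qball_of_subset: "qball_of D p \<subseteq> ext_space D" by (auto simp: qball_of_def qball_subset_ext_space split: prod.splits)
lemma qball_int_of_subset: "qball_int_of D p \<subseteq> ext_space D"
  using qball_int_subset_qball qball_subset_ext_space by (fastforce simp: qball_int_of_def split: prod.splits)

lemma ex1_mem_iff_singleton: "(\<exists>!z. z \<in> A) \<longleftrightarrow> (\<exists>z. A = {z})"
  by blast

lemma ex1_mem_image_iff: assumes "inj_on f U" "X \<subseteq> U" shows "(\<exists>!z. z \<in> f ` X) \<longleftrightarrow> (\<exists>!z. z \<in> X)"
  unfolding ex1_mem_iff_singleton
proof
  assume "\<exists>z. f ` X = {z}"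
  then obtain w where w: "f ` X = {w}" by blast
  then obtain x where x: "x \<in> X" by blast
  have "X = {x}"
  proof (intro equalityI subsetI)
    fix y assume y: "y \<in> X"
    have "f y \<in> f ` X" "f x \<in> f ` X" using x y by blast+
    then have "f y = f x" using w by simp
    then show "y \<in> {x}" using assms x y by (simp add: inj_on_eq_iff subsetD)
  qed (use x in simp)
  then show "\<exists>z. X = {z}" ..
qed auto

lemma ball_config_map:
  assumes c: "ball_config D V adj \<rho>" and inj: "inj_on \<Psi> (ext_space D)"
    and M: "\<And>p. nondeg_coords D p \<Longrightarrow> nondeg_coords D (M p)
      \<and> qball_of D (M p) = \<Psi> ` qball_of D p \<and> qball_int_of D (M p) = \<Psi> ` qball_int_of D p"
  shows "ball_config D V adj (\<lambda>v. M (\<rho> v))"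
  unfolding ball_config_def
proof (intro conjI ballI impI)
  fix v assume "v \<in> V" then show "nondeg_coords D (M (\<rho> v))" using c M by (auto simp: ball_config_def)
next
  fix u v assume uv: "u \<in> V" "v \<in> V" "u \<noteq> v"
  have nu: "nondeg_coords D (\<rho> u)" and nv: "nondeg_coords D (\<rho> v)" using c uv by (auto simp: ball_config_def)
  have hh: "qball_of D (\<rho> u) \<noteq> qball_of D (\<rho> v) \<and> qball_int_of D (\<rho> u) \<inter> qball_int_of D (\<rho> v) = {}
     \<and> (adj u v \<longleftrightarrow> (\<exists>!z. z \<in> qball_of D (\<rho> u) \<inter> qball_of D (\<rho> v)))"
    using c uv unfolding ball_config_def by simp
  note h = hh[THEN conjunct1] hh[THEN conjunct2, THEN conjunct1] hh[THEN conjunct2, THEN conjunct2]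
  have e1: "qball_of D (M (\<rho> u)) = \<Psi> ` qball_of D (\<rho> u)" "qball_of D (M (\<rho> v)) = \<Psi> ` qball_of D (\<rho> v)"
    "qball_int_of D (M (\<rho> u)) = \<Psi> ` qball_int_of D (\<rho> u)" "qball_int_of D (M (\<rho> v)) = \<Psi> ` qball_int_of D (\<rho> v)"
    using M nu nv by auto
  show "qball_of D (M (\<rho> u)) \<noteq> qball_of D (M (\<rho> v))"
    unfolding e1 using h(1) inj_on_image_eq_iff[OF inj qball_of_subset qball_of_subset] by simp
  have "\<Psi> ` qball_int_of D (\<rho> u) \<inter> \<Psi> ` qball_int_of D (\<rho> v) = \<Psi> ` (qball_int_of D (\<rho> u) \<inter> qball_int_of D (\<rho> v))"
    using inj_on_image_Int[OF inj qball_int_of_subset qball_int_of_subset] by simp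
  then show "qball_int_of D (M (\<rho> u)) \<inter> qball_int_of D (M (\<rho> v)) = {}" unfolding e1 using h(2) by simp
  have i: "\<Psi> ` qball_of D (\<rho> u) \<inter> \<Psi> ` qball_of D (\<rho> v) = \<Psi> ` (qball_of D (\<rho> u) \<inter> qball_of D (\<rho> v))"
    using inj_on_image_Int[OF inj qball_of_subset qball_of_subset] by simp
  show "adj u v \<longleftrightarrow> (\<exists>!z. z \<in> qball_of D (M (\<rho> u)) \<inter> qball_of D (M (\<rho> v)))"
  proof -
    have "qball_of D (\<rho> u) \<inter> qball_of D (\<rho> v) \<subseteq> ext_space D" using qball_of_subset by blast
    from ex1_mem_image_iff[OF inj this] show ?thesis unfolding e1 i h(3) by (rule sym)
  qed
qed

lemma translate_coords_props:
  assumes q: "q \<in> euc D"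
  shows "nondeg_coords D p \<Longrightarrow> nondeg_coords D (translate_coords D q p)
    \<and> qball_of D (translate_coords D q p) = translate_ext q ` qball_of D p
    \<and> qball_int_of D (translate_coords D q p) = translate_ext q ` qball_int_of D p"
proof -
  assume nd: "nondeg_coords D p"
  obtain a b c where p: "p = (a,b,c)" by (cases p) auto
  have "nondegenerate D a b c" using nd p by (simp add: nondeg_coords_def)
  then show ?thesis unfolding p nondeg_coords_def qball_of_def qball_int_of_def translate_coords_def prod.case
    using nondegenerate_translate[OF q] qball_translate[OF q] qball_int_translate[OF q] by blast
qed

lemma inj_on_translate_ext: "q \<in> euc D \<Longrightarrow> inj_on (translate_ext q) (ext_space D)"
  by (rule inj_on_inverseI[where g = "translate_ext (\<lambda>i. - q i)"])
     (use translate_ext_props(3)[OF euc_neg] in simp)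

lemma invert_coords_props:
  shows "nondeg_coords D p \<Longrightarrow> nondeg_coords D (invert_coords p)
    \<and> qball_of D (invert_coords p) = invert_ext D ` qball_of D p
    \<and> qball_int_of D (invert_coords p) = invert_ext D ` qball_int_of D p"
proof -
  assume nd: "nondeg_coords D p"
  obtain a b c where p: "p = (a,b,c)" by (cases p) auto
  have "nondegenerate D a b c" using nd p by (simp add: nondeg_coords_def)
  then show ?thesis unfolding p nondeg_coords_def qball_of_def qball_int_of_def invert_coords_def prod.case
    using nondegenerate_invert qball_invert qball_int_invert by blast
qed

lemma inj_on_invert_ext: "inj_on (invert_ext D) (ext_space D)"
  by (rule inj_on_inverseI[where g = "invert_ext D"]) (use invert_ext_props(2) in simp)

lemma ex_ball_config_tangent_at_infinity:
  assumes c: "ball_config D V adj \<rho>" and u: "u0 \<in> V" "u1 \<in> V" "u0 \<noteq> u1" "adj u0 u1"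
  shows "\<exists>\<rho>'. ball_config D V adj \<rho>' \<and> qball_of D (\<rho>' u0) \<inter> qball_of D (\<rho>' u1) = {None}"
proof -
  have "\<exists>!z. z \<in> qball_of D (\<rho> u0) \<inter> qball_of D (\<rho> u1)" using c u unfolding ball_config_def by blast
  then obtain z0 where z0: "qball_of D (\<rho> u0) \<inter> qball_of D (\<rho> u1) = {z0}" by blast
  show ?thesis
  proof (cases z0)
    case None then show ?thesis using c z0 by blast
  next
    case (Some q)
    have "z0 \<in> ext_space D" using z0 qball_of_subset by blast
    then have q: "q \<in> euc D" using Some by (auto simp: ext_space_def)
    define \<rho>2 where "\<rho>2 = (\<lambda>v. invert_coords (translate_coords D q (\<rho> v)))"
    have c1: "ball_config D V adj (\<lambda>v. translate_coords D q (\<rho> v))"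
      by (rule ball_config_map[OF c inj_on_translate_ext[OF q]]) (rule translate_coords_props[OF q])
    have c2: "ball_config D V adj \<rho>2" unfolding \<rho>2_def
      by (rule ball_config_map[OF c1 inj_on_invert_ext]) (rule invert_coords_props)
    have nd: "nondeg_coords D (\<rho> u0)" "nondeg_coords D (\<rho> u1)" using c u by (auto simp: ball_config_def)
    have "qball_of D (\<rho>2 u0) \<inter> qball_of D (\<rho>2 u1) = invert_ext D ` translate_ext q ` (qball_of D (\<rho> u0) \<inter> qball_of D (\<rho> u1))"
    proof -
      have a: "qball_of D (\<rho>2 u0) = invert_ext D ` translate_ext q ` qball_of D (\<rho> u0)" "qball_of D (\<rho>2 u1) = invert_ext D ` translate_ext q ` qball_of D (\<rho> u1)"
        using translate_coords_props[OF q] invert_coords_props nd unfolding \<rho>2_def by auto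
      have sub: "translate_ext q ` qball_of D (\<rho> u0) \<subseteq> ext_space D" "translate_ext q ` qball_of D (\<rho> u1) \<subseteq> ext_space D"
        using translate_ext_props(1)[OF q] qball_of_subset by blast+
      show ?thesis unfolding a
        by (simp add: inj_on_image_Int[OF inj_on_invert_ext sub] inj_on_image_Int[OF inj_on_translate_ext[OF q] qball_of_subset qball_of_subset])
    qed
    also have "\<dots> = {None}" unfolding z0 Some by (simp add: translate_ext_def invert_ext_def)
    finally show ?thesis using c2 by blast
  qed
qed

lemma qball_of_alt: "qball_of D p = qball D (fst p) (fst (snd p)) (snd (snd p))" by (cases p) (simp add: qball_of_def)
lemma qball_int_of_alt: "qball_int_of D p = qball_int D (fst p) (fst (snd p)) (snd (snd p))" by (cases p) (simp add: qball_int_of_def)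
lemma nondeg_coords_alt: "nondeg_coords D p = nondegenerate D (fst p) (fst (snd p)) (snd (snd p))" by (cases p) (simp add: nondeg_coords_def)

lemma ex_ball_config_of_packing:
  assumes pack: "ball_packing D P" and bij: "bij_betw f V P"
    and iso: "\<forall>u\<in>V. \<forall>v\<in>V. adj u v \<longleftrightarrow> snd (tangency_graph P) (f u) (f v)"
  shows "\<exists>\<rho>. ball_config D V adj \<rho>"
proof -
  have balls: "\<And>v. v \<in> V \<Longrightarrow> is_ball D (f v)" using pack bij by (auto simp: ball_packing_def bij_betw_def)
  define \<rho> where "\<rho> = (\<lambda>v. SOME p. nondeg_coords D p \<and> qball_of D p = f v)"
  have \<rho>: "\<And>v. v \<in> V \<Longrightarrow> nondeg_coords D (\<rho> v) \<and> qball_of D (\<rho> v) = f v"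
  proof -
    fix v assume "v \<in> V"
    then obtain a b c where "nondegenerate D a b c" "f v = qball D a b c" using is_ball_imp_qball balls by metis
    then have "nondeg_coords D (a,b,c) \<and> qball_of D (a,b,c) = f v" by (simp add: nondeg_coords_def qball_of_def)
    then show "nondeg_coords D (\<rho> v) \<and> qball_of D (\<rho> v) = f v" unfolding \<rho>_def by (rule someI)
  qed
  have interior_eq: "\<And>v. v \<in> V \<Longrightarrow> qball_int_of D (\<rho> v) = ext_interior D (f v)"
  proof -
    fix v assume v: "v \<in> V"
    have "nondegenerate D (fst (\<rho> v)) (fst (snd (\<rho> v))) (snd (snd (\<rho> v)))"
      "qball D (fst (\<rho> v)) (fst (snd (\<rho> v))) (snd (snd (\<rho> v))) = f v"
      using \<rho>[OF v] by (simp_all add: qball_of_alt nondeg_coords_alt)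
    then show "qball_int_of D (\<rho> v) = ext_interior D (f v)" using ext_interior_qball by (metis qball_int_of_alt)
  qed
  have "ball_config D V adj \<rho>"
    unfolding ball_config_def
  proof (intro conjI ballI impI)
    fix v assume "v \<in> V" then show "nondeg_coords D (\<rho> v)" using \<rho> by simp
  next
    fix u v assume uv: "u \<in> V" "v \<in> V" "u \<noteq> v"
    have fne: "f u \<noteq> f v" using bij uv by (auto simp: bij_betw_def inj_on_eq_iff)
    then show "qball_of D (\<rho> u) \<noteq> qball_of D (\<rho> v)" using \<rho> uv by simp
    have "f u \<in> P" "f v \<in> P" using bij uv by (auto simp: bij_betw_def)
    then have "ext_interior D (f u) \<inter> ext_interior D (f v) = {}" using pack fne by (simp add: ball_packing_def)
    then show "qball_int_of D (\<rho> u) \<inter> qball_int_of D (\<rho> v) = {}" using interior_eq uv by simp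
    show "adj u v \<longleftrightarrow> (\<exists>!z. z \<in> qball_of D (\<rho> u) \<inter> qball_of D (\<rho> v))"
      using iso uv fne \<rho> \<open>f u \<in> P\<close> \<open>f v \<in> P\<close> by (simp add: tangency_graph_def)
  qed
  then show ?thesis by blast
qed

lemma ball_configD:
  assumes "ball_config D V adj \<rho>" "u \<in> V" "v \<in> V" "u \<noteq> v"
  shows "qball_int_of D (\<rho> u) \<inter> qball_int_of D (\<rho> v) = {}"
    "adj u v \<longleftrightarrow> (\<exists>!z. z \<in> qball_of D (\<rho> u) \<inter> qball_of D (\<rho> v))"
    "qball_of D (\<rho> u) \<noteq> qball_of D (\<rho> v)"
  using assms unfolding ball_config_def by blast+

section \<open>Balls and half-spaces in a slab\<close>

definition sqdist :: "nat \<Rightarrow> (nat \<Rightarrow> real) \<Rightarrow> (nat \<Rightarrow> real) \<Rightarrow> real" where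
  "sqdist D x y = ip D (\<lambda>i. x i - y i) (\<lambda>i. x i - y i)"

definition closed_ball :: "nat \<Rightarrow> (nat \<Rightarrow> real) \<Rightarrow> real \<Rightarrow> ext_point set" where
  "closed_ball D c R = Some ` {x \<in> euc D. sqdist D x c \<le> R^2}"
definition open_ball :: "nat \<Rightarrow> (nat \<Rightarrow> real) \<Rightarrow> real \<Rightarrow> ext_point set" where
  "open_ball D c R = Some ` {x \<in> euc D. sqdist D x c < R^2}"
definition closed_halfspace :: "nat \<Rightarrow> (nat \<Rightarrow> real) \<Rightarrow> real \<Rightarrow> ext_point set" where
  "closed_halfspace D m s = insert None (Some ` {x \<in> euc D. ip D m x \<ge> s})"
definition open_halfspace :: "nat \<Rightarrow> (nat \<Rightarrow> real) \<Rightarrow> real \<Rightarrow> ext_point set" where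
  "open_halfspace D m s = Some ` {x \<in> euc D. ip D m x > s}"

lemma sqdist_nonneg: "sqdist D x y \<ge> 0" by (simp add: sqdist_def ip_self_nonneg)

lemma sqdist_self[simp]: "sqdist D x x = 0" by (simp add: sqdist_def)

lemma enorm_scale_unit: "ip D n n = 1 \<Longrightarrow> enorm D (\<lambda>i. t * n i) = \<bar>t\<bar>"
  by (simp add: enorm_scaleR enorm_def)

lemma qball_pos_eq_ball:
  assumes nd: "nondegenerate D a b c" and a: "a > 0"
  shows "(\<lambda>i. b i / a) \<in> euc D \<and> sqrt (ip D b b - a * c) / a > 0 \<and>
     qball D a b c = closed_ball D (\<lambda>i. b i / a) (sqrt (ip D b b - a * c) / a) \<and>
     qball_int D a b c = open_ball D (\<lambda>i. b i / a) (sqrt (ip D b b - a * c) / a)"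
proof -
  have be: "b \<in> euc D" and disc: "ip D b b - a * c > 0" using nd by (auto simp: nondegenerate_def)
  define R where "R = sqrt (ip D b b - a * c) / a"
  have R2: "R^2 = (ip D b b - a * c) / a^2" using disc by (simp add: R_def power_divide)
  have F: "\<And>x. qform D a b c x = a * (sqdist D x (\<lambda>i. b i / a) - R^2)"
    using a unfolding R2 sqdist_def by (simp add: qform_complete_square)
  have "qball D a b c = closed_ball D (\<lambda>i. b i / a) R"
    unfolding qball_def closed_ball_def F using a by (simp add: mult_le_0_iff)
  moreover have "qball_int D a b c = open_ball D (\<lambda>i. b i / a) R"
    unfolding qball_int_def open_ball_def F using a by (simp add: mult_less_0_iff)
  moreover have "(\<lambda>i. b i / a) \<in> euc D" using be by (auto simp: euc_def)
  moreover have "R > 0" using disc a by (simp add: R_def)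
  ultimately show ?thesis by (simp add: R_def)
qed

lemma nonpos_qball_meets_slab:
  assumes nd: "nondegenerate D a b c" and a: "a \<le> 0" and n: "n \<in> euc D" "ip D n n = 1"
    and d0: "qball_int D a b c \<inter> open_halfspace D n s0 = {}" and d1: "qball_int D a b c \<inter> open_halfspace D (\<lambda>i. - n i) (- s1) = {}"
  shows False
proof -
  have be: "b \<in> euc D" using nd by (simp add: nondegenerate_def)
  have key: "\<exists>y\<in>euc D. qform D a b c y < 0 \<and> (ip D n y > s0 \<or> ip D n y < s1)"
  proof (cases "a < 0")
    case True
    obtain M where M: "\<And>y. enorm D y > M \<Longrightarrow> qform D a b c y < 0" using qform_neg_far[OF True] by blast
    define t where "t = \<bar>M\<bar> + \<bar>s0\<bar> + 1"
    define y where "y = (\<lambda>i. t * n i)"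
    have "enorm D y = \<bar>t\<bar>" using n by (simp add: y_def enorm_scale_unit)
    then have "enorm D y > M" by (simp add: t_def)
    moreover have "ip D n y = t" using n by (simp add: y_def ip_lin)
    moreover have "y \<in> euc D" using n by (simp add: y_def euc_scale)
    ultimately show ?thesis using M by (intro bexI[of _ y]) (auto simp: t_def)
  next
    case False
    then have a0: "a = 0" using a by simp
    have bb: "ip D b b > 0" using nd a0 by (simp add: nondegenerate_def)
    have F: "\<And>y. qform D a b c y = c - 2 * ip D b y" using a0 by (simp add: qform_def)
    consider "ip D n b > 0" | "ip D n b < 0" | "ip D n b = 0" by linarith
    then show ?thesis
    proof cases
      case 1
      define t where "t = (\<bar>c\<bar> + 1) / ip D n b + \<bar>s0\<bar> + 1"
      have t: "t * ip D n b \<ge> \<bar>c\<bar> + 1" "t > s0"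
      proof -
        have "t * ip D n b = \<bar>c\<bar> + 1 + (\<bar>s0\<bar> + 1) * ip D n b" using 1 by (simp add: t_def field_simps)
        moreover have "(\<bar>s0\<bar> + 1) * ip D n b \<ge> 0" using 1 by simp
        ultimately show "t * ip D n b \<ge> \<bar>c\<bar> + 1" by simp
        have "(\<bar>c\<bar> + 1) / ip D n b \<ge> 0" using 1 by simp
        then show "t > s0" by (simp add: t_def)
      qed
      define y where "y = (\<lambda>i. t * n i)"
      have "ip D b y = t * ip D n b" by (simp add: y_def ip_lin ip_sym[of D b n])
      moreover have "ip D n y = t" using n by (simp add: y_def ip_lin)
      moreover have "y \<in> euc D" using n by (simp add: y_def euc_scale)
      ultimately show ?thesis using t by (intro bexI[of _ y]) (auto simp: F)
    next
      case 2
      define t where "t = (\<bar>c\<bar> + 1) / (- ip D n b) + \<bar>s1\<bar> + 1"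
      have t: "t * (- ip D n b) \<ge> \<bar>c\<bar> + 1" "- t < s1"
      proof -
        have "t * (- ip D n b) = \<bar>c\<bar> + 1 + (\<bar>s1\<bar> + 1) * (- ip D n b)" using 2 by (simp add: t_def field_simps)
        moreover have "(\<bar>s1\<bar> + 1) * (- ip D n b) \<ge> 0" using 2 by (intro mult_nonneg_nonneg) auto
        ultimately show "t * (- ip D n b) \<ge> \<bar>c\<bar> + 1" by simp
        have "(\<bar>c\<bar> + 1) / (- ip D n b) \<ge> 0" using 2 by (intro divide_nonneg_nonneg) auto
        then show "- t < s1" by (simp add: t_def)
      qed
      define y where "y = (\<lambda>i. (- t) * n i)"
      have "ip D b y = t * (- ip D n b)" by (simp add: y_def ip_lin ip_sym[of D b n])
      moreover have "ip D n y = - t" using n by (simp add: y_def ip_lin)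
      moreover have "y \<in> euc D" using n by (simp add: y_def euc_def)
      ultimately show ?thesis using t by (intro bexI[of _ y]) (auto simp: F)
    next
      case 3
      define t where "t = (\<bar>c\<bar> + 1) / ip D b b"
      have t: "t * ip D b b = \<bar>c\<bar> + 1" using bb by (simp add: t_def)
      define y where "y = (\<lambda>i. t * b i + (s0 + 1) * n i)"
      have "ip D b y = t * ip D b b" using 3 by (simp add: y_def ip_lin ip_sym[of D b n])
      moreover have "ip D n y = s0 + 1" using n 3 by (simp add: y_def ip_lin)
      moreover have "y \<in> euc D" using n be by (simp add: y_def euc_def)
      ultimately show ?thesis using t by (intro bexI[of _ y]) (auto simp: F)
    qed
  qed
  then obtain y where y: "y \<in> euc D" "qform D a b c y < 0" "ip D n y > s0 \<or> ip D n y < s1" by blast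
  have "Some y \<in> qball_int D a b c" using y by (simp add: Some_in_qball_int)
  moreover have "Some y \<in> open_halfspace D n s0 \<or> Some y \<in> open_halfspace D (\<lambda>i. - n i) (- s1)"
    using y by (auto simp: open_halfspace_def ip_lin)
  ultimately show False using d0 d1 by blast
qed

lemma enorm_diff_le_if_sqdist: "sqdist D x c \<le> R^2 \<Longrightarrow> R \<ge> 0 \<Longrightarrow> enorm D (\<lambda>i. x i - c i) \<le> R"
  unfolding sqdist_def enorm_def by (simp add: real_sqrt_le_iff real_le_lsqrt real_sqrt_le_mono sqrt_le_D)

lemma tangent_ball_halfspace_eq:
  assumes m: "m \<in> euc D" "ip D m m = 1" and c: "ctr \<in> euc D" and R: "R > 0"
    and d: "open_ball D ctr R \<inter> open_halfspace D m s = {}" and t: "\<exists>!z. z \<in> closed_ball D ctr R \<inter> closed_halfspace D m s"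
  shows "ip D m ctr + R = s"
proof -
  have le: "ip D m ctr + R \<le> s"
  proof (rule ccontr)
    assume "\<not> ip D m ctr + R \<le> s"
    define \<delta> where "\<delta> = ip D m ctr + R - s"
    have \<delta>: "\<delta> > 0" using \<open>\<not> _\<close> by (simp add: \<delta>_def)
    define \<tau> where "\<tau> = R - min \<delta> R / 2"
    have \<tau>: "0 \<le> \<tau>" "\<tau> < R" "\<tau> > R - \<delta>" using \<delta> R by (auto simp: \<tau>_def min_def)
    define x where "x = (\<lambda>i. ctr i + \<tau> * m i)"
    have xe: "x \<in> euc D" using m c by (auto simp: x_def euc_def)
    have "sqdist D x ctr = \<tau>^2" using m by (simp add: sqdist_def x_def ip_lin power2_eq_square)
    also have "\<tau>^2 < R^2" using \<tau> by (simp add: power_strict_mono)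
    finally have "Some x \<in> open_ball D ctr R" using xe by (simp add: open_ball_def)
    moreover have "ip D m x = ip D m ctr + \<tau>" using m by (simp add: x_def ip_lin)
    then have "Some x \<in> open_halfspace D m s" using xe \<tau> by (simp add: open_halfspace_def \<delta>_def)
    ultimately show False using d by blast
  qed
  have ge: "ip D m ctr + R \<ge> s"
  proof (rule ccontr)
    assume lt: "\<not> ip D m ctr + R \<ge> s"
    have "closed_ball D ctr R \<inter> closed_halfspace D m s = {}"
    proof (rule ccontr)
      assume "closed_ball D ctr R \<inter> closed_halfspace D m s \<noteq> {}"
      then obtain x where x: "x \<in> euc D" "sqdist D x ctr \<le> R^2" "ip D m x \<ge> s"
        by (auto simp: closed_ball_def closed_halfspace_def)
      have "ip D m (\<lambda>i. x i - ctr i) \<le> enorm D m * enorm D (\<lambda>i. x i - ctr i)" by (rule ip_le_enorm_mult)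
      also have "\<dots> \<le> R" using m enorm_diff_le_if_sqdist[OF x(2)] R by (simp add: enorm_def)
      finally have "ip D m x \<le> ip D m ctr + R" by (simp add: ip_lin)
      then show False using x lt by simp
    qed
    then show False using t by blast
  qed
  show ?thesis using le ge by simp
qed

lemma ip_midpoint_right: "ip D x (\<lambda>i. (c1 i + c2 i) / 2) = (ip D x c1 + ip D x c2) / 2"
  by (simp only: ip_div_right ip_add_right)
lemma ip_midpoint_left: "ip D (\<lambda>i. (c1 i + c2 i) / 2) x = (ip D c1 x + ip D c2 x) / 2"
  by (simp only: ip_div_left ip_add_left)
lemma ip_midpoint_midpoint: "ip D (\<lambda>i. (c1 i + c2 i) / 2) (\<lambda>i. (c1 i + c2 i) / 2) = (ip D c1 c1 + 2 * ip D c1 c2 + ip D c2 c2) / 4"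
  by (simp only: ip_div_right ip_add_right ip_div_left ip_add_left ip_sym[of D c2 c1]) (simp add: field_simps)

lemma sqdist_expand: "sqdist D x y = ip D x x - 2 * ip D x y + ip D y y"
  unfolding sqdist_def by (rule ip_diff_self)

lemma sqdist_parallelogram:
  "sqdist D x c1 + sqdist D x c2 = 2 * sqdist D x (\<lambda>i. (c1 i + c2 i) / 2) + sqdist D c1 c2 / 2"
  by (simp only: sqdist_expand ip_midpoint_right ip_midpoint_left ip_sym[of D c2 c1]) (simp add: field_simps)

lemma sqdist_midpoint: "sqdist D (\<lambda>i. (c1 i + c2 i) / 2) c1 = sqdist D c1 c2 / 4"
  "sqdist D (\<lambda>i. (c1 i + c2 i) / 2) c2 = sqdist D c1 c2 / 4"
  by (simp_all only: sqdist_expand ip_midpoint_midpoint ip_midpoint_left ip_sym[of D c2 c1]) (simp_all add: field_simps)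

lemma sqdist_commute: "sqdist D x y = sqdist D y x"
  unfolding sqdist_expand by (simp add: ip_sym[of D y x])

lemma sqdist_ge_if_open_balls_disjoint:
  assumes c: "c1 \<in> euc D" "c2 \<in> euc D" and R: "R > 0" and d: "open_ball D c1 R \<inter> open_ball D c2 R = {}"
  shows "sqdist D c1 c2 \<ge> 4 * R^2"
proof (rule ccontr)
  assume "\<not> sqdist D c1 c2 \<ge> 4 * R^2"
  define mid where "mid = (\<lambda>i. (c1 i + c2 i) / 2)"
  have me: "mid \<in> euc D" using c by (auto simp: mid_def euc_def)
  have "sqdist D mid c1 < R^2" "sqdist D mid c2 < R^2" using \<open>\<not> _\<close> by (simp_all add: mid_def sqdist_midpoint)
  then have "Some mid \<in> open_ball D c1 R \<inter> open_ball D c2 R" using me by (simp add: open_ball_def)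
  then show False using d by blast
qed

lemma tangent_balls_iff_sqdist:
  assumes c: "c1 \<in> euc D" "c2 \<in> euc D" and R: "R > 0" and ge: "sqdist D c1 c2 \<ge> 4 * R^2"
  shows "(\<exists>!z. z \<in> closed_ball D c1 R \<inter> closed_ball D c2 R) \<longleftrightarrow> sqdist D c1 c2 = 4 * R^2"
proof
  assume ex: "\<exists>!z. z \<in> closed_ball D c1 R \<inter> closed_ball D c2 R"
  then obtain z where "z \<in> closed_ball D c1 R \<inter> closed_ball D c2 R" by blast
  then obtain x where x: "sqdist D x c1 \<le> R^2" "sqdist D x c2 \<le> R^2" by (auto simp: closed_ball_def)
  have "sqdist D c1 c2 / 2 \<le> sqdist D x c1 + sqdist D x c2"
    using sqdist_parallelogram[of D x c1 c2] sqdist_nonneg[of D x] by simp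
  then show "sqdist D c1 c2 = 4 * R^2" using x ge by simp
next
  assume eq: "sqdist D c1 c2 = 4 * R^2"
  define mid where "mid = (\<lambda>i. (c1 i + c2 i) / 2)"
  have me: "mid \<in> euc D" using c by (auto simp: mid_def euc_def)
  have "sqdist D mid c1 = R^2" "sqdist D mid c2 = R^2" using eq by (simp_all add: mid_def sqdist_midpoint)
  then have inm: "Some mid \<in> closed_ball D c1 R \<inter> closed_ball D c2 R" using me by (simp add: closed_ball_def)
  have "\<forall>z \<in> closed_ball D c1 R \<inter> closed_ball D c2 R. z = Some mid"
  proof
    fix z assume "z \<in> closed_ball D c1 R \<inter> closed_ball D c2 R"
    then obtain x where z: "z = Some x" and x: "x \<in> euc D" "sqdist D x c1 \<le> R^2" "sqdist D x c2 \<le> R^2"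
      by (auto simp: closed_ball_def)
    have "2 * sqdist D x mid \<le> 0" using sqdist_parallelogram[of D x c1 c2] x eq by (simp add: mid_def)
    then have "sqdist D x mid = 0" using sqdist_nonneg[of D x mid] by simp
    moreover have "(\<lambda>i. x i - mid i) \<in> euc D" using euc_diff[OF x(1) me] .
    ultimately have "(\<lambda>i. x i - mid i) = (\<lambda>i. 0)" using ip_self_eq_0_iff[of "\<lambda>i. x i - mid i" D]
      unfolding sqdist_def by blast
    then have "x = mid" by (simp add: fun_eq_iff)
    then show "z = Some mid" using z by simp
  qed
  then show "\<exists>!z. z \<in> closed_ball D c1 R \<inter> closed_ball D c2 R"
    by (intro ex1I[of _ "Some mid"] inm) simp
qed

lemma neg_qball_meets_halfspace:
  assumes a: "a < 0" and nd: "nondegenerate D 0 b' c'"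
  shows "qball_int D a b c \<inter> qball_int D 0 b' c' \<noteq> {}"
proof -
  obtain M where M: "\<And>y. enorm D y > M \<Longrightarrow> qform D a b c y < 0" using qform_neg_far[OF a] by blast
  obtain y where "y \<in> euc D" "M < enorm D y" "qform D 0 b' c' y < 0"
    using halfspace_qform_neg_far[OF nd] by blast
  then have "Some y \<in> qball_int D a b c \<inter> qball_int D 0 b' c'" using M by (simp add: Some_in_qball_int)
  then show ?thesis by blast
qed

lemma qball_zero_eq_halfspace:
  assumes nd: "nondegenerate D 0 b c"
  shows "enorm D b > 0 \<and> (\<lambda>i. b i / enorm D b) \<in> euc D \<and> ip D (\<lambda>i. b i / enorm D b) (\<lambda>i. b i / enorm D b) = 1 \<and>
     qball D 0 b c = closed_halfspace D (\<lambda>i. b i / enorm D b) (c / (2 * enorm D b)) \<and>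
     qball_int D 0 b c = open_halfspace D (\<lambda>i. b i / enorm D b) (c / (2 * enorm D b))"
proof -
  have bb: "ip D b b > 0" using nd by (simp add: nondegenerate_def)
  have be: "b \<in> euc D" using nd by (simp add: nondegenerate_def)
  define B where "B = enorm D b"
  have B0: "B > 0" using bb by (simp add: B_def enorm_def)
  have BB: "B * B = ip D b b" using enorm_power2[of D b] by (simp add: B_def power2_eq_square)
  define n where "n = (\<lambda>i. b i / B)"
  have ne: "n \<in> euc D" using be by (auto simp: n_def euc_def)
  have nn: "ip D n n = 1" using B0 BB bb by (simp add: n_def ip_lin)
  have F: "\<And>x. qform D 0 b c x = c - 2 * B * ip D n x" using B0 by (simp add: qform_def n_def ip_lin)
  have F1: "\<And>x. qform D 0 b c x \<le> 0 \<longleftrightarrow> ip D n x \<ge> c / (2 * B)" unfolding F using B0 by (simp add: field_simps)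
  have F2: "\<And>x. qform D 0 b c x < 0 \<longleftrightarrow> ip D n x > c / (2 * B)" unfolding F using B0 by (simp add: field_simps)
  have "qball D 0 b c = closed_halfspace D n (c / (2 * B))" unfolding qball_def closed_halfspace_def F1 by simp
  moreover have "qball_int D 0 b c = open_halfspace D n (c / (2 * B))" unfolding qball_int_def open_halfspace_def F2 by simp
  ultimately show ?thesis using B0 ne nn by (simp add: B_def n_def)
qed

lemma qballs_through_infinity_are_halfspaces:
  assumes nd0: "nondegenerate D a0 b0 c0" and nd1: "nondegenerate D a1 b1 c1"
    and di: "qball_int D a0 b0 c0 \<inter> qball_int D a1 b1 c1 = {}"
    and inf: "None \<in> qball D a0 b0 c0" "None \<in> qball D a1 b1 c1"
  shows "a0 = 0 \<and> a1 = 0"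
proof -
  have a: "a0 \<le> 0" "a1 \<le> 0" using inf by (auto simp: None_in_qball)
  have "\<not> (a0 < 0 \<and> a1 < 0)" using di None_in_qball_int[of D a0 b0 c0] None_in_qball_int[of D a1 b1 c1] by blast
  moreover have "\<not> (a0 < 0 \<and> a1 = 0)" using neg_qball_meets_halfspace[of a0 D b1 c1 b0 c0] nd1 di by auto
  moreover have "\<not> (a1 < 0 \<and> a0 = 0)" using neg_qball_meets_halfspace[of a1 D b0 c0 b1 c1] nd0 di by (auto simp: Int_commute)
  ultimately show ?thesis using a by linarith
qed

text \<open>If the normals are not opposite, both half-spaces contain the far points along their bisector.\<close>

lemma disjoint_halfspaces_antiparallel:
  assumes h0: "nondegenerate D 0 b0 c0" and h1: "nondegenerate D 0 b1 c1"
    and di: "qball_int D 0 b0 c0 \<inter> qball_int D 0 b1 c1 = {}"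
  shows "(\<lambda>i. b1 i / enorm D b1) = (\<lambda>i. - (b0 i / enorm D b0))"
proof -
  have b0e: "b0 \<in> euc D" and b1e: "b1 \<in> euc D" using h0 h1 by (simp_all add: nondegenerate_def)
  define B0 where "B0 = enorm D b0"
  define B1 where "B1 = enorm D b1"
  have B0: "B0 > 0" and B1: "B1 > 0"
    using qball_zero_eq_halfspace[OF h0] qball_zero_eq_halfspace[OF h1] by (simp_all add: B0_def B1_def)
  have BB0: "ip D b0 b0 = B0 * B0" using enorm_power2[of D b0] by (simp add: B0_def power2_eq_square)
  have BB1: "ip D b1 b1 = B1 * B1" using enorm_power2[of D b1] by (simp add: B1_def power2_eq_square)
  define \<kappa> where "\<kappa> = ip D b0 b1 + B0 * B1"
  have \<kappa>0: "\<kappa> \<ge> 0" using abs_ip_le_enorm_mult[of D b0 b1] by (simp add: \<kappa>_def B0_def B1_def)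
  define v where "v = (\<lambda>i. B0 * b1 i + B1 * b0 i)"
  have ve: "v \<in> euc D" using b0e b1e by (auto simp: v_def euc_def)
  have v0: "ip D b0 v = B0 * \<kappa>" "ip D b1 v = B1 * \<kappa>"
    by (simp_all add: v_def ip_lin \<kappa>_def BB0 BB1 ip_sym[of D b1 b0] algebra_simps)
  have \<kappa>z: "\<kappa> = 0"
  proof (rule ccontr)
    assume "\<kappa> \<noteq> 0"
    then have kp: "\<kappa> > 0" using \<kappa>0 by simp
    define t where "t = (\<bar>c0\<bar> + 1) / (B0 * \<kappa>) + (\<bar>c1\<bar> + 1) / (B1 * \<kappa>)"
    define y where "y = (\<lambda>i. t * v i)"
    have ye: "y \<in> euc D" using ve by (simp add: y_def euc_scale)
    have t0: "t * (B0 * \<kappa>) \<ge> \<bar>c0\<bar> + 1"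
    proof -
      have "t * (B0 * \<kappa>) = \<bar>c0\<bar> + 1 + (\<bar>c1\<bar> + 1) / (B1 * \<kappa>) * (B0 * \<kappa>)"
        using B0 kp by (simp add: t_def field_simps)
      moreover have "(\<bar>c1\<bar> + 1) / (B1 * \<kappa>) * (B0 * \<kappa>) \<ge> 0" using B0 B1 kp by simp
      ultimately show ?thesis by simp
    qed
    have t1: "t * (B1 * \<kappa>) \<ge> \<bar>c1\<bar> + 1"
    proof -
      have "t * (B1 * \<kappa>) = (\<bar>c0\<bar> + 1) / (B0 * \<kappa>) * (B1 * \<kappa>) + (\<bar>c1\<bar> + 1)"
        using B1 kp by (simp add: t_def field_simps)
      moreover have "(\<bar>c0\<bar> + 1) / (B0 * \<kappa>) * (B1 * \<kappa>) \<ge> 0" using B0 B1 kp by simp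
      ultimately show ?thesis by simp
    qed
    have "qform D 0 b0 c0 y = c0 - 2 * (t * (B0 * \<kappa>))" by (simp add: qform_def y_def ip_lin v0)
    then have f0: "qform D 0 b0 c0 y < 0" using t0 by simp
    have "qform D 0 b1 c1 y = c1 - 2 * (t * (B1 * \<kappa>))" by (simp add: qform_def y_def ip_lin v0)
    then have f1: "qform D 0 b1 c1 y < 0" using t1 by simp
    have "Some y \<in> qball_int D 0 b0 c0 \<inter> qball_int D 0 b1 c1" using f0 f1 ye by (simp add: Some_in_qball_int)
    then show False using di by simp
  qed
  have "ip D v v = 2 * B0 * B1 * \<kappa>"
    by (simp add: v_def ip_lin \<kappa>_def BB0 BB1 ip_sym[of D b1 b0] algebra_simps)
  then have "v = (\<lambda>i. 0)" using \<kappa>z ip_self_eq_0_iff[OF ve] by simp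
  then have vb: "\<And>i. B0 * b1 i = - (B1 * b0 i)" by (simp add: v_def fun_eq_iff add_eq_0_iff)
  show ?thesis unfolding B0_def[symmetric] B1_def[symmetric]
  proof
    fix i
    have "b1 i = - (B1 * b0 i) / B0" using vb[of i] B0 by (simp add: field_simps)
    then show "b1 i / B1 = - (b0 i / B0)" using B1 by simp
  qed
qed

lemma tangent_at_infinity_slab:
  assumes nd0: "nondegenerate D a0 b0 c0" and nd1: "nondegenerate D a1 b1 c1"
    and di: "qball_int D a0 b0 c0 \<inter> qball_int D a1 b1 c1 = {}" and ss: "qball D a0 b0 c0 \<inter> qball D a1 b1 c1 = {None}"
  shows "\<exists>n s0 s1. n \<in> euc D \<and> ip D n n = 1 \<and> s1 < s0 \<and>
     qball D a0 b0 c0 = closed_halfspace D n s0 \<and> qball_int D a0 b0 c0 = open_halfspace D n s0 \<and>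
     qball D a1 b1 c1 = closed_halfspace D (\<lambda>i. - n i) (- s1) \<and> qball_int D a1 b1 c1 = open_halfspace D (\<lambda>i. - n i) (- s1)"
proof -
  have "None \<in> qball D a0 b0 c0" "None \<in> qball D a1 b1 c1" using ss by auto
  then have a0: "a0 = 0" and a1: "a1 = 0" using qballs_through_infinity_are_halfspaces[OF nd0 nd1 di] by simp_all
  have h0: "nondegenerate D 0 b0 c0" and h1: "nondegenerate D 0 b1 c1" using nd0 nd1 a0 a1 by simp_all
  define n where "n = (\<lambda>i. b0 i / enorm D b0)"
  have n1: "(\<lambda>i. b1 i / enorm D b1) = (\<lambda>i. - n i)"
    using disjoint_halfspaces_antiparallel[OF h0 h1] di a0 a1 by (simp add: n_def)
  define s0 where "s0 = c0 / (2 * enorm D b0)"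
  define s1 where "s1 = - (c1 / (2 * enorm D b1))"
  have f0: "qball D a0 b0 c0 = closed_halfspace D n s0" "qball_int D a0 b0 c0 = open_halfspace D n s0" "n \<in> euc D" "ip D n n = 1"
    using qball_zero_eq_halfspace[OF h0] a0 by (simp_all add: n_def s0_def)
  have f1: "qball D a1 b1 c1 = closed_halfspace D (\<lambda>i. - n i) (- s1)" "qball_int D a1 b1 c1 = open_halfspace D (\<lambda>i. - n i) (- s1)"
    using qball_zero_eq_halfspace[OF h1] a1 n1 by (simp_all add: s1_def)
  have "s1 < s0"
  proof (rule ccontr)
    assume "\<not> s1 < s0"
    define x where "x = (\<lambda>i. s0 * n i)"
    have xe: "x \<in> euc D" using f0 by (simp add: x_def euc_scale)
    have "ip D n x = s0" using f0 by (simp add: x_def ip_lin)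
    then have "Some x \<in> closed_halfspace D n s0 \<inter> closed_halfspace D (\<lambda>i. - n i) (- s1)"
      using xe \<open>\<not> s1 < s0\<close> by (simp add: closed_halfspace_def ip_lin)
    then show False using ss f0 f1 by auto
  qed
  then show ?thesis using f0 f1 by blast
qed

lemma ball_in_slab:
  assumes n: "n \<in> euc D" "ip D n n = 1" "s1 < s0" and nd: "nondegenerate D a b c"
    and d0: "qball_int D a b c \<inter> open_halfspace D n s0 = {}" and d1: "qball_int D a b c \<inter> open_halfspace D (\<lambda>i. - n i) (- s1) = {}"
    and t0: "\<exists>!z. z \<in> qball D a b c \<inter> closed_halfspace D n s0" and t1: "\<exists>!z. z \<in> qball D a b c \<inter> closed_halfspace D (\<lambda>i. - n i) (- s1)"
  shows "\<exists>ctr. ctr \<in> euc D \<and> ip D n ctr = (s0 + s1) / 2 \<and> qball D a b c = closed_ball D ctr ((s0 - s1) / 2)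
     \<and> qball_int D a b c = open_ball D ctr ((s0 - s1) / 2)"
proof -
  have a: "a > 0"
  proof (rule ccontr)
    assume "\<not> a > 0"
    then show False using nonpos_qball_meets_slab[OF nd _ n(1,2) d0 d1] by simp
  qed
  define ctr where "ctr = (\<lambda>i. b i / a)"
  define R where "R = sqrt (ip D b b - a * c) / a"
  have bf: "ctr \<in> euc D" "R > 0" "qball D a b c = closed_ball D ctr R" "qball_int D a b c = open_ball D ctr R"
    using qball_pos_eq_ball[OF nd a] by (simp_all add: ctr_def R_def)
  have nn: "(\<lambda>i. - n i) \<in> euc D" "ip D (\<lambda>i. - n i) (\<lambda>i. - n i) = 1" using n by (simp_all add: euc_neg ip_lin)
  have e0: "ip D n ctr + R = s0"
    by (rule tangent_ball_halfspace_eq[OF n(1,2) bf(1,2)]) (use d0 t0 bf in simp_all)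
  have e1: "ip D (\<lambda>i. - n i) ctr + R = - s1"
    by (rule tangent_ball_halfspace_eq[OF nn bf(1,2)]) (use d1 t1 bf in simp_all)
  have "ip D n ctr = (s0 + s1) / 2" "R = (s0 - s1) / 2" using e0 e1 by (simp_all add: ip_lin)
  then show ?thesis using bf by blast
qed

lemma closed_halfspace_is_ball:
  assumes m: "m \<in> euc D" "ip D m m = 1"
  shows "is_ball D (closed_halfspace D m s) \<and> ext_interior D (closed_halfspace D m s) = open_halfspace D m s"
proof -
  have nd: "nondegenerate D 0 m (2 * s)" using m by (simp add: nondegenerate_def)
  have en: "enorm D m = 1" using m by (simp add: enorm_def)
  have "(\<lambda>i. m i / enorm D m) = m" using en by simp
  then have e: "qball D 0 m (2 * s) = closed_halfspace D m s" "qball_int D 0 m (2 * s) = open_halfspace D m s"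
    using qball_zero_eq_halfspace[OF nd] en by simp_all
  show ?thesis using qball_is_ball[OF nd] ext_interior_qball[OF nd] unfolding e by simp
qed

lemma closed_ball_is_ball:
  assumes c: "c \<in> euc D" and R: "R > 0"
  shows "is_ball D (closed_ball D c R) \<and> ext_interior D (closed_ball D c R) = open_ball D c R"
proof -
  have nd: "nondegenerate D 1 c (ip D c c - R^2)" using c R by (simp add: nondegenerate_def)
  have r: "sqrt (ip D c c - 1 * (ip D c c - R^2)) / 1 = R" using R by simp
  have e: "qball D 1 c (ip D c c - R^2) = closed_ball D c R" "qball_int D 1 c (ip D c c - R^2) = open_ball D c R"
    using qball_pos_eq_ball[OF nd] unfolding r by simp_all
  show ?thesis using qball_is_ball[OF nd] ext_interior_qball[OF nd] unfolding e by simp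
qed

lemma opposite_halfspaces_tangent:
  assumes m: "m \<in> euc D" "ip D m m = 1" and s: "s0 + s1 > 0"
  shows "open_halfspace D m s0 \<inter> open_halfspace D (\<lambda>i. - m i) s1 = {}
    \<and> (\<exists>!z. z \<in> closed_halfspace D m s0 \<inter> closed_halfspace D (\<lambda>i. - m i) s1)"
proof -
  have "open_halfspace D m s0 \<inter> open_halfspace D (\<lambda>i. - m i) s1 = {}" using s by (auto simp: open_halfspace_def ip_lin)
  moreover have "closed_halfspace D m s0 \<inter> closed_halfspace D (\<lambda>i. - m i) s1 = {None}" using s by (auto simp: closed_halfspace_def ip_lin)
  ultimately show ?thesis by simp
qed

lemma ball_tangent_halfspace:
  assumes m: "m \<in> euc D" "ip D m m = 1" and c: "c \<in> euc D" and R: "R > 0" and e: "ip D m c + R = s"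
  shows "open_ball D c R \<inter> open_halfspace D m s = {} \<and> (\<exists>!z. z \<in> closed_ball D c R \<inter> closed_halfspace D m s)"
proof -
  have bnd: "\<And>x. ip D m x \<le> ip D m c + enorm D (\<lambda>i. x i - c i)"
  proof -
    fix x
    have "ip D m (\<lambda>i. x i - c i) \<le> enorm D m * enorm D (\<lambda>i. x i - c i)" by (rule ip_le_enorm_mult)
    then show "ip D m x \<le> ip D m c + enorm D (\<lambda>i. x i - c i)" using m by (simp add: ip_lin enorm_def)
  qed
  have "open_ball D c R \<inter> open_halfspace D m s = {}"
  proof (rule ccontr)
    assume "open_ball D c R \<inter> open_halfspace D m s \<noteq> {}"
    then obtain x where x: "sqdist D x c < R^2" "ip D m x > s" by (auto simp: open_ball_def open_halfspace_def)
    have "sqrt (sqdist D x c) < sqrt (R^2)" using x(1) by (rule real_sqrt_less_mono)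
    then have "enorm D (\<lambda>i. x i - c i) < R"
      using R unfolding sqdist_def enorm_def by simp
    then show False using bnd[of x] x e by simp
  qed
  moreover have "\<exists>!z. z \<in> closed_ball D c R \<inter> closed_halfspace D m s"
  proof -
    define p where "p = (\<lambda>i. c i + R * m i)"
    have pe: "p \<in> euc D" using c m by (auto simp: p_def euc_def)
    have "sqdist D p c = R^2" using m by (simp add: sqdist_def p_def ip_lin power2_eq_square)
    moreover have "ip D m p = s" using m e by (simp add: p_def ip_lin)
    ultimately have pin: "Some p \<in> closed_ball D c R \<inter> closed_halfspace D m s" using pe by (simp add: closed_ball_def closed_halfspace_def)
    have "\<forall>z\<in>closed_ball D c R \<inter> closed_halfspace D m s. z = Some p"
    proof
      fix z assume "z \<in> closed_ball D c R \<inter> closed_halfspace D m s"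
      then obtain x where z: "z = Some x" and x: "x \<in> euc D" "sqdist D x c \<le> R^2" "ip D m x \<ge> s"
        by (auto simp: closed_ball_def closed_halfspace_def)
      have mx: "ip D m (\<lambda>i. x i - c i) \<ge> R" using x(3) e by (simp add: ip_lin)
      have "sqdist D x p = sqdist D x c - 2 * R * ip D m (\<lambda>i. x i - c i) + R^2"
      proof -
        have "(\<lambda>i. x i - p i) = (\<lambda>i. (x i - c i) - R * m i)" by (simp add: p_def algebra_simps)
        then show ?thesis using m unfolding sqdist_def
          by (simp add: ip_lin ip_sym[of D m "\<lambda>i. x i - c i"] ip_sym[of D c m] ip_sym[of D x m] power2_eq_square algebra_simps)
      qed
      also have "\<dots> \<le> 0"
      proof -
        have "2 * R * ip D m (\<lambda>i. x i - c i) \<ge> 2 * R * R" using mx R by simp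
        then show ?thesis using x(2) by (simp add: power2_eq_square)
      qed
      finally have "sqdist D x p = 0" using sqdist_nonneg[of D x p] by simp
      moreover have "(\<lambda>i. x i - p i) \<in> euc D" using euc_diff[OF x(1) pe] .
      ultimately have "(\<lambda>i. x i - p i) = (\<lambda>i. 0)" using ip_self_eq_0_iff[of "\<lambda>i. x i - p i" D]
        unfolding sqdist_def by blast
      then have "x = p" by (simp add: fun_eq_iff)
      then show "z = Some p" using z by simp
    qed
    then show ?thesis by (intro ex1I[of _ "Some p"] pin) simp
  qed
  ultimately show ?thesis by simp
qed

lemma open_balls_disjoint_if_sqdist:
  assumes ge: "sqdist D c1 c2 \<ge> 4 * R^2"
  shows "open_ball D c1 R \<inter> open_ball D c2 R = {}"
proof (rule ccontr)
  assume "open_ball D c1 R \<inter> open_ball D c2 R \<noteq> {}"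
  then obtain x where x: "sqdist D x c1 < R^2" "sqdist D x c2 < R^2" by (auto simp: open_ball_def)
  have "sqdist D c1 c2 / 2 \<le> sqdist D x c1 + sqdist D x c2"
    using sqdist_parallelogram[of D x c1 c2] sqdist_nonneg[of D x] by simp
  then show False using x ge by simp
qed

lemma open_halfspace_nonempty: "m \<in> euc D \<Longrightarrow> ip D m m = 1 \<Longrightarrow> open_halfspace D m s \<noteq> {}"
proof -
  assume m: "m \<in> euc D" "ip D m m = 1"
  define x where "x = (\<lambda>i. (s + 1) * m i)"
  have "x \<in> euc D" "ip D m x > s" using m by (simp_all add: x_def euc_scale ip_lin)
  then show ?thesis by (auto simp: open_halfspace_def)
qed

lemma open_ball_nonempty: "c \<in> euc D \<Longrightarrow> R > 0 \<Longrightarrow> open_ball D c R \<noteq> {}"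
  by (auto simp: open_ball_def)

section \<open>Projecting along a regular simplex\<close>

lemma ip_reflection:
  assumes "ip k w w \<noteq> 0"
  shows "ip k (\<lambda>i. x i - (2 * ip k w x / ip k w w) * w i) (\<lambda>i. z i - (2 * ip k w z / ip k w w) * w i)
    = ip k x z"
proof -
  define a where "a = 2 * ip k w x / ip k w w"
  define b where "b = 2 * ip k w z / ip k w w"
  have "ip k (\<lambda>i. x i - a * w i) (\<lambda>i. z i - b * w i) = ip k x z - b * ip k x w - a * ip k w z + a * b * ip k w w"
    by (simp add: ip_lin algebra_simps)
  also have "\<dots> = ip k x z" using assms unfolding a_def b_def by (simp add: field_simps ip_sym[of k x w])
  finally show ?thesis by (simp add: a_def b_def)
qed

text \<open>A Householder reflection moves the unit vector along \<open>p\<close> to a coordinate axis; dropping that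
  coordinate realises the orthogonal projection onto \<open>p\<^sup>\<bottom>\<close> in \<open>k - 1\<close> coordinates.\<close>

lemma ex_coords_orthogonal_complement:
  assumes p: "p \<in> euc k" and pp: "ip k p p > 0"
  shows "\<exists>g. (\<forall>x\<in>euc k. g x \<in> euc (k-1)) \<and>
     (\<forall>x\<in>euc k. \<forall>z\<in>euc k. ip (k-1) (g x) (g z) = ip k x z - ip k x p * ip k z p / ip k p p)"
proof -
  obtain m where km: "k = Suc m" using pp by (cases k) (auto simp: ip_def)
  define L where "L = sqrt (ip k p p)"
  have L0: "L > 0" using pp by (simp add: L_def)
  have LL: "L * L = ip k p p" using pp by (simp add: L_def)
  define q where "q = (\<lambda>i. (1/L) * p i)"
  have qq: "ip k q q = 1" using L0 LL pp by (simp add: q_def ip_lin)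
  have xq: "\<And>x. ip k x q = ip k x p / L" by (simp add: q_def ip_lin)
  define \<sigma> :: real where "\<sigma> = (if q m > 0 then -1 else 1)"
  have s2: "\<sigma> * \<sigma> = 1" by (simp add: \<sigma>_def)
  have s3: "\<And>y. \<sigma> * (\<sigma> * y) = y" by (simp add: \<sigma>_def)
  have sq: "\<sigma> * q m \<le> 0" by (simp add: \<sigma>_def)
  define w where "w = (\<lambda>i. q i - \<sigma> * unit_vec m i)"
  have e1: "ip k (unit_vec m) (unit_vec m) = 1" "ip k q (unit_vec m) = q m" "ip k (unit_vec m) q = q m"
    using km by (simp_all add: ip_unit_vec_left ip_unit_vec_right) (simp add: unit_vec_def)
  have ww: "ip k w w = 2 - 2 * \<sigma> * q m"
    using s2 qq unfolding w_def by (simp add: ip_lin e1 algebra_simps)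
  have ww0: "ip k w w > 0" using ww sq by simp
  have wx: "\<And>x. ip k w x = ip k q x - \<sigma> * x m"
    using km by (simp add: w_def ip_lin ip_unit_vec_left)
  define H where "H = (\<lambda>x i. x i - (2 * ip k w x / ip k w w) * w i)"
  have HH: "\<And>x z. ip k (H x) (H z) = ip k x z" using ww0 unfolding H_def by (intro ip_reflection) simp
  have Hm: "\<And>x. H x m = \<sigma> * ip k x q"
  proof -
    fix x
    have wm: "w m = q m - \<sigma>" by (simp add: w_def unit_vec_def)
    have "H x m = x m - (2 * (ip k q x - \<sigma> * x m) / (2 - 2 * \<sigma> * q m)) * (q m - \<sigma>)"
      unfolding H_def ww by (simp add: wx wm)
    also have "\<dots> = \<sigma> * ip k q x"
    proof -
      have d: "2 - 2 * \<sigma> * q m \<noteq> 0" using sq by simp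
      have "q m - \<sigma> = - \<sigma> * (1 - \<sigma> * q m)" using s2 by (simp add: algebra_simps)
      then have "(2 * (ip k q x - \<sigma> * x m) / (2 - 2 * \<sigma> * q m)) * (q m - \<sigma>)
          = - \<sigma> * (ip k q x - \<sigma> * x m)" using d by (simp add: field_simps s3)
      then show ?thesis using s2 by (simp add: algebra_simps)
    qed
    finally show "H x m = \<sigma> * ip k x q" by (simp add: ip_sym)
  qed
  define g where "g = (\<lambda>x i. if i = m then 0 else H x i)"
  have qe: "q \<in> euc k" using p by (simp add: q_def euc_def)
  have we: "w \<in> euc k" using qe km by (auto simp: w_def euc_def unit_vec_def)
  have "\<forall>x\<in>euc k. g x \<in> euc (k-1)"
    using we km by (auto simp: g_def H_def euc_def)
  moreover have "\<forall>x\<in>euc k. \<forall>z\<in>euc k. ip (k-1) (g x) (g z) = ip k x z - ip k x p * ip k z p / ip k p p"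
  proof (intro ballI)
    fix x z assume "x \<in> euc k" "z \<in> euc k"
    have "ip (k-1) (g x) (g z) = ip m (H x) (H z)"
      using km by (simp add: ip_def g_def)
    also have "\<dots> = ip k (H x) (H z) - H x m * H z m" using km by (simp add: ip_Suc)
    also have "\<dots> = ip k x z - ip k x q * ip k z q" using s2 by (simp add: HH Hm algebra_simps)
    also have "\<dots> = ip k x z - ip k x p * ip k z p / ip k p p"
      using LL L0 by (simp add: xq field_simps)
    finally show "ip (k-1) (g x) (g z) = ip k x z - ip k x p * ip k z p / ip k p p" .
  qed
  ultimately show ?thesis by blast
qed

lemma simplex_step_identity:
  fixes \<beta> h :: real and m :: nat
  assumes "\<beta> > 0" "h > 0"
  shows "\<beta> * \<beta> / (\<beta> + h) + real m * (\<beta> * h / (\<beta> + h))^2 / (h + real m * (\<beta> * h / (\<beta> + h)))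
       = real (Suc m) * \<beta>^2 / (h + real (Suc m) * \<beta>)"
proof -
  have p1: "\<beta> + h > 0" using assms by simp
  have p2: "h + real m * \<beta> + \<beta> > 0" using assms by (simp add: add_pos_nonneg)
  define D1 where "D1 = \<beta> + h"
  define D2 where "D2 = h + real (Suc m) * \<beta>"
  have D1: "D1 > 0" using p1 by (simp add: D1_def)
  have D2: "D2 > 0" using p2 by (simp add: D2_def algebra_simps)
  have e: "h + real m * (\<beta> * h / (\<beta> + h)) = h * D2 / D1"
    using D1 unfolding D1_def D2_def by (simp add: field_simps)
  have e2: "(\<beta> * h / (\<beta> + h))^2 = \<beta>^2 * h^2 / D1^2" by (simp add: D1_def power_divide power_mult_distrib)
  have e3: "real m * (\<beta>^2 * h^2 / D1^2) / (h * D2 / D1) = real m * \<beta>^2 * h / (D1 * D2)"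
    using D1 D2 assms by (simp add: field_simps power2_eq_square)
  have e4: "D2 + real m * h = real (Suc m) * D1" by (simp add: D1_def D2_def algebra_simps)
  have "\<beta> * \<beta> / D1 + real m * \<beta>^2 * h / (D1 * D2) = \<beta>^2 * (D2 + real m * h) / (D1 * D2)"
    using D1 D2 by (simp add: field_simps power2_eq_square)
  also have "\<dots> = real (Suc m) * \<beta>^2 / D2" unfolding e4 using D1 D2 by (simp add: field_simps)
  finally show ?thesis unfolding e e2 e3 by (simp add: D1_def D2_def)
qed

lemma ex_coords_off_regular_simplex:
  "\<lbrakk>\<forall>c\<in>set C. c \<in> euc k;
    \<forall>i<length C. \<forall>j<length C. ip k (C!i) (C!j) = (if i = j then \<beta> + h else \<beta>);
    Y \<subseteq> euc k; \<forall>y\<in>Y. \<forall>c\<in>set C. ip k y c = \<beta>; \<beta> > 0; h > 0\<rbrakk> \<Longrightarrow>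
   \<exists>f. (\<forall>y\<in>Y. f y \<in> euc (k - length C)) \<and>
      (\<forall>y\<in>Y. \<forall>z\<in>Y. ip (k - length C) (f y) (f z)
           = ip k y z - real (length C) * \<beta>^2 / (h + real (length C) * \<beta>))"
proof (induction "length C" arbitrary: C k Y \<beta>)
  case 0
  then show ?case by (rule_tac x="\<lambda>y. y" in exI) auto
next
  case (Suc n C k Y \<beta>)
  then obtain c C0 where Ceq: "C = c # C0" by (cases C) auto
  have nC: "n = length (map g C0)" for g using Suc.hyps(2) Ceq by simp
  note P = Suc.prems[unfolded Ceq]
  show ?case
  proof -
    have ce: "c \<in> euc k" using P by simp
    have cc: "ip k c c = \<beta> + h" using P(2)[rule_format, of 0 0] by simp
    have cc0: "ip k c c > 0" using cc P by simp
    obtain g where g1: "\<forall>x\<in>euc k. g x \<in> euc (k-1)"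
      and g2: "\<forall>x\<in>euc k. \<forall>z\<in>euc k. ip (k-1) (g x) (g z) = ip k x z - ip k x c * ip k z c / ip k c c"
      using ex_coords_orthogonal_complement[OF ce cc0] by blast
    define \<beta>' where "\<beta>' = \<beta> * h / (\<beta> + h)"
    have b'0: "\<beta>' > 0" using P by (simp add: \<beta>'_def)
    have Ce: "\<forall>x\<in>set C0. x \<in> euc k" using P by simp
    have Cc: "\<forall>i<length C0. ip k (C0!i) c = \<beta>"
    proof (intro allI impI)
      fix i assume "i < length C0"
      then show "ip k (C0!i) c = \<beta>" using P(2)[rule_format, of "Suc i" 0] by simp
    qed
    have CC: "\<forall>i<length C0. \<forall>j<length C0. ip k (C0!i) (C0!j) = (if i = j then \<beta> + h else \<beta>)"
    proof (intro allI impI)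
      fix i j assume "i < length C0" "j < length C0"
      then show "ip k (C0!i) (C0!j) = (if i = j then \<beta> + h else \<beta>)"
        using P(2)[rule_format, of "Suc i" "Suc j"] by simp
    qed
    have IH: "\<exists>f. (\<forall>y\<in>g ` Y. f y \<in> euc (k - 1 - length (map g C0))) \<and>
        (\<forall>y\<in>g ` Y. \<forall>z\<in>g ` Y. ip (k - 1 - length (map g C0)) (f y) (f z)
             = ip (k-1) y z - real (length (map g C0)) * \<beta>'^2 / (h + real (length (map g C0)) * \<beta>'))"
    proof (rule Suc.hyps(1))
      show "\<forall>x\<in>set (map g C0). x \<in> euc (k - 1)" using Ce g1 by auto
      show "\<forall>i<length (map g C0). \<forall>j<length (map g C0).
          ip (k - 1) (map g C0 ! i) (map g C0 ! j) = (if i = j then \<beta>' + h else \<beta>')"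
      proof (intro allI impI)
        fix i j assume ij: "i < length (map g C0)" "j < length (map g C0)"
        then have ie: "C0!i \<in> euc k" "C0!j \<in> euc k" using Ce by auto
        have "ip (k - 1) (map g C0 ! i) (map g C0 ! j) = ip k (C0!i) (C0!j) - \<beta> * \<beta> / (\<beta> + h)"
          using ij g2 ie Cc cc by simp
        then show "ip (k - 1) (map g C0 ! i) (map g C0 ! j) = (if i = j then \<beta>' + h else \<beta>')"
          using CC ij P(5,6) unfolding \<beta>'_def by (cases "i = j") (simp_all add: field_simps)
      qed
      show "g ` Y \<subseteq> euc (k - 1)" using P(3) g1 by auto
      show "\<forall>y\<in>g ` Y. \<forall>x\<in>set (map g C0). ip (k - 1) y x = \<beta>'"
      proof (intro ballI)
        fix y x assume "y \<in> g ` Y" "x \<in> set (map g C0)"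
        then obtain y0 x0 where "y0 \<in> Y" "x0 \<in> set C0" "y = g y0" "x = g x0" by auto
        moreover have "ip k y0 x0 = \<beta>" "ip k y0 c = \<beta>" "ip k x0 c = \<beta>"
          using P(4) calculation Cc by (auto simp: in_set_conv_nth)
        moreover have "y0 \<in> euc k" "x0 \<in> euc k" using calculation P(3) Ce by auto
        ultimately have "ip (k - 1) y x = \<beta> - \<beta> * \<beta> / (\<beta> + h)" using g2 cc by simp
        then show "ip (k - 1) y x = \<beta>'" using P(5,6) unfolding \<beta>'_def
          by (simp add: field_simps)
      qed
    qed (use b'0 P nC in auto)
    then obtain f where f1: "\<forall>y\<in>g ` Y. f y \<in> euc (k - 1 - length C0)"
      and f2: "\<forall>y\<in>g ` Y. \<forall>z\<in>g ` Y. ip (k - 1 - length C0) (f y) (f z)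
             = ip (k-1) y z - real (length C0) * \<beta>'^2 / (h + real (length C0) * \<beta>')" by auto
    have A1: "\<forall>y\<in>Y. f (g y) \<in> euc (k - length (c # C0))" using f1 by simp
    have A2: "\<forall>y\<in>Y. \<forall>z\<in>Y. ip (k - length (c # C0)) (f (g y)) (f (g z)) = ip k y z - real (length (c # C0)) * \<beta>^2 / (h + real (length (c # C0)) * \<beta>)"
    proof (intro ballI)
      fix y z assume yz: "y \<in> Y" "z \<in> Y"
      then have ye: "y \<in> euc k" "z \<in> euc k" using P(3) by auto
      have yc: "ip k y c = \<beta>" "ip k z c = \<beta>" using P(4) yz by auto
      have "ip (k - length (c # C0)) (f (g y)) (f (g z)) = ip (k-1) (g y) (g z) - real (length C0) * \<beta>'^2 / (h + real (length C0) * \<beta>')"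
        using f2 yz by simp
      also have "\<dots> = ip k y z - (\<beta> * \<beta> / (\<beta> + h) + real (length C0) * \<beta>'^2 / (h + real (length C0) * \<beta>'))"
        using g2 ye yc cc by simp
      also have "\<beta> * \<beta> / (\<beta> + h) + real (length C0) * \<beta>'^2 / (h + real (length C0) * \<beta>') =
         real (length (c # C0)) * \<beta>^2 / (h + real (length (c # C0)) * \<beta>)"
        unfolding \<beta>'_def using simplex_step_identity[OF P(5,6)] by simp
      finally show "ip (k - length (c # C0)) (f (g y)) (f (g z)) = ip k y z - real (length (c # C0)) * \<beta>^2 / (h + real (length (c # C0)) * \<beta>)" .
    qed
    show ?thesis unfolding Ceq by (rule exI[of _ "\<lambda>y. f (g y)"]) (use A1 A2 in blast)
  qed
qed

lemma ip_diff_polarization: "ip D (\<lambda>j. a j - w j) (\<lambda>j. b j - w j) = (sqdist D a w + sqdist D b w - sqdist D a b) / 2"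
  unfolding sqdist_expand by (simp add: ip_lin ip_sym[of D w a] ip_sym[of D w b] ip_sym[of D b a] field_simps)

lemma simplex_gram_identity:
  fixes \<alpha> :: nat and R s :: real
  assumes "\<alpha> \<ge> 1" "R > 0"
  shows "(4 * R^2 - s / 2 - real (\<alpha> - 1) * (2 * R^2)^2 / (2 * R^2 + real (\<alpha> - 1) * (2 * R^2)))
      / (2 * R^2 * (real \<alpha> + 1) / real \<alpha>) = 1 - s * real \<alpha> / (4 * R^2 * (real \<alpha> + 1))"
proof -
  have a: "real (\<alpha> - 1) = real \<alpha> - 1" using assms by (simp add: of_nat_diff)
  have a1: "real \<alpha> \<ge> 1" using assms by simp
  have "2 * R^2 + (real \<alpha> - 1) * (2 * R^2) = 2 * R^2 * real \<alpha>" by (simp add: algebra_simps)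
  then have k: "real (\<alpha> - 1) * (2 * R^2)^2 / (2 * R^2 + real (\<alpha> - 1) * (2 * R^2)) = 2 * R^2 * (real \<alpha> - 1) / real \<alpha>"
    unfolding a using assms a1 by (simp add: field_simps power2_eq_square)
  define A where "A = real \<alpha>"
  have A0: "A > 0" using a1 by (simp add: A_def)
  define Q where "Q = 2 * R^2 * (A + 1)"
  have Q0: "Q > 0" using A0 assms by (simp add: Q_def)
  have n1: "4 * R^2 - s / 2 - 2 * R^2 * (A - 1) / A = (Q - s * A / 2) / A"
    using A0 by (simp add: Q_def field_simps)
  have n2: "(Q - s * A / 2) / A / (Q / A) = 1 - s * A / (2 * Q)"
    using A0 Q0 by (simp add: field_simps)
  have "(4 * R^2 - s / 2 - 2 * R^2 * (A - 1) / A) / (Q / A) = 1 - s * A / (2 * Q)"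
    unfolding n1 n2 ..
  then show ?thesis unfolding k by (simp add: A_def Q_def algebra_simps)
qed

lemma ex_coords_in_hyperplane:
  assumes n: "n \<in> euc D" "ip D n n = 1" and p: "p \<in> euc D" "ip D n p = m"
  shows "\<exists>g. (\<forall>x\<in>euc D. g x \<in> euc (D - 1)) \<and> (\<forall>x\<in>euc D. \<forall>z\<in>euc D. ip D n x = m \<longrightarrow> ip D n z = m \<longrightarrow>
      ip (D - 1) (g x) (g z) = ip D (\<lambda>j. x j - p j) (\<lambda>j. z j - p j))"
proof -
  obtain g where g1: "\<forall>x\<in>euc D. g x \<in> euc (D - 1)"
    and g2: "\<forall>x\<in>euc D. \<forall>z\<in>euc D. ip (D - 1) (g x) (g z) = ip D x z - ip D x n * ip D z n / ip D n n"
    using ex_coords_orthogonal_complement[OF n(1)] n(2) by auto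
  have "ip D (\<lambda>j. x j - p j) n = 0" if "ip D n x = m" for x
    using that p(2) by (simp add: ip_lin ip_sym[of D _ n])
  then show ?thesis using g1 g2 n(2) euc_diff[OF _ p(1)]
    by (intro exI[of _ "\<lambda>x. g (\<lambda>j. x j - p j)"]) simp
qed

lemma ex_gram_of_simplex_equidistant:
  fixes d \<alpha> :: nat and R m :: real and kc :: "nat \<Rightarrow> nat \<Rightarrow> real" and yc :: "'a \<Rightarrow> nat \<Rightarrow> real"
  assumes \<alpha>: "\<alpha> \<ge> 1" and R: "R > 0" and n: "n \<in> euc (d+\<alpha>)" "ip (d+\<alpha>) n n = 1"
    and kce: "\<forall>i\<in>{2..<\<alpha>+2}. kc i \<in> euc (d+\<alpha>) \<and> ip (d+\<alpha>) n (kc i) = m"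
    and yce: "\<forall>v\<in>VG. yc v \<in> euc (d+\<alpha>) \<and> ip (d+\<alpha>) n (yc v) = m"
    and kk: "\<forall>i\<in>{2..<\<alpha>+2}. \<forall>j\<in>{2..<\<alpha>+2}. i \<noteq> j \<longrightarrow> sqdist (d+\<alpha>) (kc i) (kc j) = 4 * R^2"
    and yk: "\<forall>v\<in>VG. \<forall>i\<in>{2..<\<alpha>+2}. sqdist (d+\<alpha>) (yc v) (kc i) = 4 * R^2"
  shows "\<exists>P. \<forall>v\<in>VG. P v \<in> euc d \<and> (\<forall>w\<in>VG. ip d (P v) (P w)
      = 1 - sqdist (d+\<alpha>) (yc v) (yc w) * real \<alpha> / (4 * R^2 * (real \<alpha> + 1)))"
proof -
  define D where "D = d + \<alpha>"
  define oo where "oo = kc 2"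
  have k2: "2 \<in> {2..<\<alpha>+2}" using \<alpha> by simp
  have oe: "oo \<in> euc D" and no: "ip D n oo = m" using kce k2 by (simp_all add: oo_def D_def)
  obtain g where g1: "\<forall>x\<in>euc D. g x \<in> euc (D - 1)"
    and gip: "\<And>x z. x \<in> euc D \<Longrightarrow> z \<in> euc D \<Longrightarrow> ip D n x = m \<Longrightarrow> ip D n z = m \<Longrightarrow>
      ip (D - 1) (g x) (g z) = ip D (\<lambda>j. x j - oo j) (\<lambda>j. z j - oo j)"
    using ex_coords_in_hyperplane[of n D oo m] n oe no by (auto simp: D_def)
  define C where "C = map (\<lambda>i. g (kc i)) [3..<\<alpha>+2]"
  have setC: "set C = (\<lambda>i. g (kc i)) ` {3..<\<alpha>+2}" by (simp only: C_def set_map set_upt)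
  have lenC: "length C = \<alpha> - 1" by (simp only: C_def length_map length_upt)
  have Cnth: "\<And>i. i < length C \<Longrightarrow> C ! i = g (kc (i + 3))"
  proof -
    fix i assume i: "i < length C"
    then have i': "i < length [3..<\<alpha>+2]" by (simp only: C_def length_map)
    then have "3 + i < \<alpha> + 2" by (simp only: length_upt)
    then have "[3..<\<alpha>+2] ! i = 3 + i" by (rule nth_upt)
    then show "C ! i = g (kc (i + 3))" unfolding C_def nth_map[OF i'] by (simp add: add.commute)
  qed
  have kcD: "\<And>i. i \<in> {2..<\<alpha>+2} \<Longrightarrow> kc i \<in> euc D \<and> ip D n (kc i) = m" using kce by (simp add: D_def)
  have ycD: "\<And>v. v \<in> VG \<Longrightarrow> yc v \<in> euc D \<and> ip D n (yc v) = m" using yce by (simp add: D_def)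
  define Y where "Y = (\<lambda>v. g (yc v)) ` VG"
  have "\<exists>f. (\<forall>y\<in>Y. f y \<in> euc (D - 1 - length C)) \<and>
      (\<forall>y\<in>Y. \<forall>z\<in>Y. ip (D - 1 - length C) (f y) (f z)
           = ip (D - 1) y z - real (length C) * (2 * R^2)^2 / (2 * R^2 + real (length C) * (2 * R^2)))"
  proof (rule ex_coords_off_regular_simplex)
    show "\<forall>c\<in>set C. c \<in> euc (D - 1)" using g1 kcD unfolding setC by auto
    show "\<forall>i<length C. \<forall>j<length C. ip (D - 1) (C ! i) (C ! j) = (if i = j then 2 * R^2 + 2 * R^2 else 2 * R^2)"
    proof (intro allI impI)
      fix i j assume ij: "i < length C" "j < length C"
      have ii: "i + 3 \<in> {2..<\<alpha>+2}" "j + 3 \<in> {2..<\<alpha>+2}" using ij lenC by auto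
      have "ip (D - 1) (C ! i) (C ! j) = ip D (\<lambda>j'. kc (i+3) j' - oo j') (\<lambda>j'. kc (j+3) j' - oo j')"
        using ij Cnth gip kcD ii by simp
      also have "\<dots> = (sqdist D (kc (i+3)) oo + sqdist D (kc (j+3)) oo - sqdist D (kc (i+3)) (kc (j+3))) / 2"
        by (rule ip_diff_polarization)
      also have "\<dots> = (if i = j then 2 * R^2 + 2 * R^2 else 2 * R^2)"
        using kk ii k2 unfolding oo_def D_def by auto
      finally show "ip (D - 1) (C ! i) (C ! j) = (if i = j then 2 * R^2 + 2 * R^2 else 2 * R^2)" .
    qed
    show "Y \<subseteq> euc (D - 1)" using g1 ycD by (auto simp: Y_def)
    show "\<forall>y\<in>Y. \<forall>c\<in>set C. ip (D - 1) y c = 2 * R^2"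
    proof (intro ballI)
      fix y c assume y: "y \<in> Y" and c: "c \<in> set C"
      obtain v where v: "v \<in> VG" "y = g (yc v)" using y by (auto simp: Y_def)
      obtain i where i: "i \<in> {3..<\<alpha>+2}" "c = g (kc i)" using c unfolding setC by blast
      have i2: "i \<in> {2..<\<alpha>+2}" using i by auto
      have "ip (D - 1) y c = ip D (\<lambda>j. yc v j - oo j) (\<lambda>j. kc i j - oo j)" using v i gip ycD kcD i2 by simp
      also have "\<dots> = (sqdist D (yc v) oo + sqdist D (kc i) oo - sqdist D (yc v) (kc i)) / 2"
        by (rule ip_diff_polarization)
      also have "\<dots> = 2 * R^2" using kk yk v i2 k2 i unfolding oo_def D_def by auto
      finally show "ip (D - 1) y c = 2 * R^2" .
    qed
  qed (use R in auto)
  then obtain f where f1: "\<forall>y\<in>Y. f y \<in> euc (D - 1 - length C)"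
    and f2: "\<forall>y\<in>Y. \<forall>z\<in>Y. ip (D - 1 - length C) (f y) (f z)
           = ip (D - 1) y z - real (length C) * (2 * R^2)^2 / (2 * R^2 + real (length C) * (2 * R^2))"
    by blast
  have Dd: "D - 1 - length C = d" using \<alpha> lenC by (simp add: D_def)
  define \<kappa> where "\<kappa> = real (\<alpha> - 1) * (2 * R^2)^2 / (2 * R^2 + real (\<alpha> - 1) * (2 * R^2))"
  define \<rho>0 where "\<rho>0 = sqrt (2 * R^2 * (real \<alpha> + 1) / real \<alpha>)"
  have r0: "\<rho>0 > 0" using R \<alpha> by (simp add: \<rho>0_def)
  have r2: "\<rho>0 * \<rho>0 = 2 * R^2 * (real \<alpha> + 1) / real \<alpha>" using R \<alpha> by (simp add: \<rho>0_def)
  define P where "P = (\<lambda>v i. f (g (yc v)) i / \<rho>0)"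
  have "\<forall>v\<in>VG. P v \<in> euc d \<and> (\<forall>w\<in>VG. ip d (P v) (P w)
      = 1 - sqdist (d+\<alpha>) (yc v) (yc w) * real \<alpha> / (4 * R^2 * (real \<alpha> + 1)))"
  proof (intro ballI conjI)
    fix v assume v: "v \<in> VG"
    have yv: "g (yc v) \<in> Y" using v by (simp add: Y_def)
    then show "P v \<in> euc d" using f1 Dd by (auto simp: P_def euc_def)
    fix w assume w: "w \<in> VG"
    have yw: "g (yc w) \<in> Y" using w by (simp add: Y_def)
    have "ip d (P v) (P w) = ip d (f (g (yc v))) (f (g (yc w))) / (\<rho>0 * \<rho>0)"
      by (simp add: P_def ip_lin)
    also have "ip d (f (g (yc v))) (f (g (yc w))) = ip D (\<lambda>j. yc v j - oo j) (\<lambda>j. yc w j - oo j) - \<kappa>"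
      using f2 yv yw Dd gip ycD v w lenC by (simp add: \<kappa>_def)
    also have "ip D (\<lambda>j. yc v j - oo j) (\<lambda>j. yc w j - oo j) = (sqdist D (yc v) oo + sqdist D (yc w) oo - sqdist D (yc v) (yc w)) / 2"
      by (rule ip_diff_polarization)
    also have "\<dots> = 4 * R^2 - sqdist D (yc v) (yc w) / 2" using yk v w k2 unfolding oo_def D_def by auto
    finally show "ip d (P v) (P w) = 1 - sqdist (d+\<alpha>) (yc v) (yc w) * real \<alpha> / (4 * R^2 * (real \<alpha> + 1))"
      unfolding r2 \<kappa>_def using simplex_gram_identity[OF \<alpha> R] by (simp add: D_def)
  qed
  then show ?thesis by blast
qed

lemma arccos_inv_succ_bounds:
  fixes \<alpha> :: nat assumes "\<alpha> \<ge> 1"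
  shows "0 < arccos (1 / (real \<alpha> + 1))" "arccos (1 / (real \<alpha> + 1)) < pi"
    "0 < 1 / (real \<alpha> + 1)" "1 / (real \<alpha> + 1) < 1"
proof -
  have a: "real \<alpha> \<ge> 1" using assms by simp
  show p: "0 < 1 / (real \<alpha> + 1)" by simp
  show q: "1 / (real \<alpha> + 1) < 1" using a by (simp add: field_simps)
  have "-1 < 1 / (real \<alpha> + 1)" using p by linarith
  from arccos_lt_bounded[OF this q] show "0 < arccos (1 / (real \<alpha> + 1))" "arccos (1 / (real \<alpha> + 1)) < pi"
    by auto
qed

lemma gram_le_inv_succ_iff:
  fixes \<alpha> R s :: real
  assumes "\<alpha> > 0" "R > 0" "4 * R^2 \<le> s"
  shows "1 - s * \<alpha> / (4 * R^2 * (\<alpha> + 1)) \<le> 1 / (\<alpha> + 1)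
    \<and> (1 - s * \<alpha> / (4 * R^2 * (\<alpha> + 1)) = 1 / (\<alpha> + 1) \<longleftrightarrow> s = 4 * R^2)"
proof -
  define K where "K = \<alpha> / (4 * R^2 * (\<alpha> + 1))"
  have K0: "K > 0" using assms by (simp add: K_def)
  have k: "4 * R^2 * K = \<alpha> / (\<alpha> + 1)" using assms by (simp add: K_def)
  have "\<alpha> + 1 > 0" using assms by simp
  then have t: "1 / (\<alpha> + 1) = 1 - 4 * R^2 * K" unfolding k by (simp add: field_simps)
  have "4 * R^2 * K \<le> s * K" using assms(3) K0 by (simp add: mult_right_mono)
  moreover have "s * K = 4 * R^2 * K \<longleftrightarrow> s = 4 * R^2" using K0 by simp
  ultimately show ?thesis unfolding t by (simp add: K_def)
qed

lemma spherical_code_of_gram: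
  fixes d \<alpha> :: nat and G :: "'a graph" and P :: "'a \<Rightarrow> nat \<Rightarrow> real" and ds :: "'a \<Rightarrow> 'a \<Rightarrow> real"
  assumes \<alpha>: "\<alpha> \<ge> 1" and G: "finite_graph G" and R: "R > 0"
    and P: "\<forall>v\<in>fst G. P v \<in> euc d \<and> (\<forall>w\<in>fst G. ip d (P v) (P w) = 1 - ds v w * real \<alpha> / (4 * R^2 * (real \<alpha> + 1)))"
    and ds: "\<forall>v\<in>fst G. \<forall>w\<in>fst G. v \<noteq> w \<longrightarrow> ds v w \<ge> 4 * R^2 \<and> (snd G v w \<longleftrightarrow> ds v w = 4 * R^2)"
    and ds0: "\<forall>v\<in>fst G. ds v v = 0"
  shows "\<exists>X. spherical_code d (arccos (1 / (real \<alpha> + 1))) X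
            \<and> graph_iso G (min_dist_graph d (arccos (1 / (real \<alpha> + 1))) X)"
proof -
  define t where "t = 1 / (real \<alpha> + 1)"
  define \<theta> where "\<theta> = arccos t"
  have tb: "0 < \<theta>" "\<theta> < pi" "0 < t" "t < 1" using arccos_inv_succ_bounds[OF \<alpha>] by (simp_all add: t_def \<theta>_def)
  have A: "real \<alpha> > 0" using \<alpha> by simp
  have unit: "\<And>v. v \<in> fst G \<Longrightarrow> ip d (P v) (P v) = 1" using P ds0 by simp
  have ipform: "ip d (P v) (P w) \<le> t \<and> (snd G v w \<longleftrightarrow> ip d (P v) (P w) = t)"
    if vw: "v \<in> fst G" "w \<in> fst G" "v \<noteq> w" for v w
    using gram_le_inv_succ_iff[of "real \<alpha>" R "ds v w"] A R ds vw P by (simp add: t_def)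
  have lb: "\<And>v w. v \<in> fst G \<Longrightarrow> w \<in> fst G \<Longrightarrow> -1 \<le> ip d (P v) (P w) \<and> ip d (P v) (P w) \<le> 1"
  proof -
    fix v w assume "v \<in> fst G" "w \<in> fst G"
    then have "\<bar>ip d (P v) (P w)\<bar> \<le> 1" using abs_ip_le_sqrt_mult[of d "P v" "P w"] unit by simp
    then show "-1 \<le> ip d (P v) (P w) \<and> ip d (P v) (P w) \<le> 1" by linarith
  qed
  have inj: "inj_on P (fst G)"
  proof (rule inj_onI, rule ccontr)
    fix v w assume "v \<in> fst G" "w \<in> fst G" "P v = P w" "v \<noteq> w"
    then show False using ipform[of v w] unit[of v] tb by simp
  qed
  define X where "X = P ` fst G"
  have fin: "finite (fst G)" using G by (simp add: finite_graph_def)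
  have code: "spherical_code d \<theta> X"
    unfolding spherical_code_def
  proof (intro conjI ballI impI)
    show "0 < \<theta>" "\<theta> < pi" using tb by simp_all
    show "finite X" using fin by (simp add: X_def)
    show "X \<subseteq> unit_sphere d" using P unit by (auto simp: X_def unit_sphere_def enorm_def)
    fix x y assume "x \<in> X" "y \<in> X" "x \<noteq> y"
    then obtain v w where vw: "v \<in> fst G" "w \<in> fst G" "x = P v" "y = P w" "v \<noteq> w" by (auto simp: X_def)
    have "arccos t \<le> arccos (ip d x y)"
      using arccos_le_arccos[of "ip d x y" t] ipform[OF vw(1,2,5)] lb[OF vw(1,2)] tb vw by simp
    then show "\<theta> \<le> sph_dist d x y" by (simp add: sph_dist_def \<theta>_def)
  qed
  have iso: "graph_iso G (min_dist_graph d \<theta> X)"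
    unfolding graph_iso_def
  proof (intro exI conjI ballI)
    show "bij_betw P (fst G) (fst (min_dist_graph d \<theta> X))"
      using inj by (simp add: min_dist_graph_def X_def bij_betw_def)
    fix u v assume uv: "u \<in> fst G" "v \<in> fst G"
    show "snd G u v \<longleftrightarrow> snd (min_dist_graph d \<theta> X) (P u) (P v)"
    proof (cases "u = v")
      case True
      then show ?thesis using G by (simp add: finite_graph_def min_dist_graph_def)
    next
      case False
      have ne: "P u \<noteq> P v" using inj uv False by (simp add: inj_on_eq_iff)
      have "sph_dist d (P u) (P v) = \<theta> \<longleftrightarrow> ip d (P u) (P v) = t"
        unfolding sph_dist_def \<theta>_def
        by (rule arccos_eq_iff) (use lb[OF uv] tb in auto)
      then show ?thesis using ipform[OF uv False] ne uv by (simp add: min_dist_graph_def X_def)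
    qed
  qed
  show ?thesis using code iso by (auto simp: \<theta>_def t_def)
qed

section \<open>Packings in normal form\<close>

lemma ball_packable_of_balls:
  assumes irrefl: "\<And>v. v \<in> fst G \<Longrightarrow> \<not> snd G v v"
    and ball: "\<And>v. v \<in> fst G \<Longrightarrow> is_ball D (B v) \<and> ext_interior D (B v) \<noteq> {}"
    and pair: "\<And>u v. u \<in> fst G \<Longrightarrow> v \<in> fst G \<Longrightarrow> u \<noteq> v \<Longrightarrow>
      ext_interior D (B u) \<inter> ext_interior D (B v) = {} \<and> (snd G u v \<longleftrightarrow> (\<exists>!z. z \<in> B u \<inter> B v))"
  shows "ball_packable D G"
proof -
  have inj: "inj_on B (fst G)"
  proof (rule inj_onI, rule ccontr)
    fix u v assume "u \<in> fst G" "v \<in> fst G" "B u = B v" "u \<noteq> v"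
    then show False using ball[of u] pair[of u v] by simp
  qed
  have "ball_packing D (B ` fst G)"
    unfolding ball_packing_def using ball pair by fastforce
  moreover have "graph_iso G (tangency_graph (B ` fst G))"
    unfolding graph_iso_def
  proof (intro exI[of _ B] conjI ballI)
    show "bij_betw B (fst G) (fst (tangency_graph (B ` fst G)))"
      using inj by (simp add: bij_betw_def tangency_graph_def)
    fix u v assume uv: "u \<in> fst G" "v \<in> fst G"
    show "snd G u v \<longleftrightarrow> snd (tangency_graph (B ` fst G)) (B u) (B v)"
      using irrefl[of u] pair[OF uv] inj uv
      by (cases "u = v") (auto simp: inj_on_eq_iff tangency_graph_def)
  qed
  ultimately show ?thesis unfolding ball_packable_def by blast
qed

text \<open>Normal form of a packing in which two tangent balls touch all others.\<close>

definition slab_arrangement ::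
    "nat \<Rightarrow> 'v set \<Rightarrow> ('v \<Rightarrow> 'v \<Rightarrow> bool) \<Rightarrow> (nat \<Rightarrow> real) \<Rightarrow> real \<Rightarrow> real \<Rightarrow>
      ('v \<Rightarrow> nat \<Rightarrow> real) \<Rightarrow> bool"
  where "slab_arrangement D V adj n m R c \<longleftrightarrow> n \<in> euc D \<and> ip D n n = 1 \<and> R > 0 \<and>
     (\<forall>w\<in>V. c w \<in> euc D \<and> ip D n (c w) = m) \<and>
     (\<forall>w\<in>V. \<forall>w'\<in>V. w \<noteq> w' \<longrightarrow>
        4 * R^2 \<le> sqdist D (c w) (c w') \<and> (adj w w' \<longleftrightarrow> sqdist D (c w) (c w') = 4 * R^2))"

definition apexes :: "'v graph \<Rightarrow> 'v \<Rightarrow> 'v \<Rightarrow> bool" where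
  "apexes G h0 h1 \<longleftrightarrow> h0 \<in> fst G \<and> h1 \<in> fst G \<and> h0 \<noteq> h1 \<and>
     (\<forall>u\<in>fst G. \<forall>h\<in>{h0, h1}. u \<noteq> h \<longrightarrow> snd G u h \<and> snd G h u)"

lemma ex_slab_arrangement_of_ball_packable:
  assumes packable: "ball_packable D G" and apex: "apexes G h0 h1"
  shows "\<exists>n m R c. slab_arrangement D (fst G - {h0, h1}) (snd G) n m R c"
proof -
  define V where "V = fst G"
  obtain P f where pack: "ball_packing D P" and bij: "bij_betw f V P"
    and iso: "\<forall>u\<in>V. \<forall>v\<in>V. snd G u v \<longleftrightarrow> snd (tangency_graph P) (f u) (f v)"
    using packable by (auto simp: ball_packable_def graph_iso_def tangency_graph_def V_def)
  have h: "h0 \<in> V" "h1 \<in> V" "h0 \<noteq> h1" "snd G h0 h1" using apex by (auto simp: apexes_def V_def)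
  obtain \<rho>0 where "ball_config D V (snd G) \<rho>0" using ex_ball_config_of_packing[OF pack bij iso] by blast
  then obtain \<rho> where c: "ball_config D V (snd G) \<rho>" and inf: "qball_of D (\<rho> h0) \<inter> qball_of D (\<rho> h1) = {None}"
    using ex_ball_config_tangent_at_infinity[of D V "snd G"] h by blast
  have nd: "\<And>v. v \<in> V \<Longrightarrow> nondeg_coords D (\<rho> v)" using c by (simp add: ball_config_def)
  obtain n s0 s1 where n: "n \<in> euc D" "ip D n n = 1" "s1 < s0"
    and h0: "qball_of D (\<rho> h0) = closed_halfspace D n s0" "qball_int_of D (\<rho> h0) = open_halfspace D n s0"
    and h1: "qball_of D (\<rho> h1) = closed_halfspace D (\<lambda>i. - n i) (- s1)"
      "qball_int_of D (\<rho> h1) = open_halfspace D (\<lambda>i. - n i) (- s1)"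
    using tangent_at_infinity_slab[of D "fst (\<rho> h0)" "fst (snd (\<rho> h0))" "snd (snd (\<rho> h0))"
        "fst (\<rho> h1)" "fst (snd (\<rho> h1))" "snd (snd (\<rho> h1))"]
      nd[OF h(1)] nd[OF h(2)] ball_configD(1)[OF c h(1-3)] inf
    unfolding qball_of_alt qball_int_of_alt nondeg_coords_alt by metis
  define W where "W = V - {h0, h1}"
  define R where "R = (s0 - s1) / 2"
  define m where "m = (s0 + s1) / 2"
  have R0: "R > 0" using n by (simp add: R_def)
  have "\<exists>ctr. ctr \<in> euc D \<and> ip D n ctr = m \<and> qball_of D (\<rho> w) = closed_ball D ctr R
      \<and> qball_int_of D (\<rho> w) = open_ball D ctr R" if w: "w \<in> W" for w
  proof -
    have wV: "w \<in> V" "w \<noteq> h0" "w \<noteq> h1" and adj: "snd G w h0" "snd G w h1"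
      using w apex by (auto simp: W_def V_def apexes_def)
    show ?thesis
      using ball_in_slab[OF n, of "fst (\<rho> w)" "fst (snd (\<rho> w))" "snd (snd (\<rho> w))"] nd[OF wV(1)]
        ball_configD(1,2)[OF c wV(1) h(1) wV(2)] ball_configD(1,2)[OF c wV(1) h(2) wV(3)] h0 h1 adj
      by (simp add: qball_of_alt qball_int_of_alt nondeg_coords_alt m_def R_def)
  qed
  then obtain ctr where ctr: "\<And>w. w \<in> W \<Longrightarrow> ctr w \<in> euc D \<and> ip D n (ctr w) = m
      \<and> qball_of D (\<rho> w) = closed_ball D (ctr w) R \<and> qball_int_of D (\<rho> w) = open_ball D (ctr w) R"
    by metis
  have "4 * R^2 \<le> sqdist D (ctr w) (ctr w') \<and> (snd G w w' \<longleftrightarrow> sqdist D (ctr w) (ctr w') = 4 * R^2)"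
    if ww: "w \<in> W" "w' \<in> W" "w \<noteq> w'" for w w'
  proof -
    have wV: "w \<in> V" "w' \<in> V" using ww by (auto simp: W_def)
    have ge: "4 * R^2 \<le> sqdist D (ctr w) (ctr w')"
      using sqdist_ge_if_open_balls_disjoint[of "ctr w" D "ctr w'" R] ctr[OF ww(1)] ctr[OF ww(2)] R0
        ball_configD(1)[OF c wV ww(3)] by simp
    then show ?thesis
      using tangent_balls_iff_sqdist[of "ctr w" D "ctr w'" R, OF _ _ R0] ctr[OF ww(1)] ctr[OF ww(2)]
        ball_configD(2)[OF c wV ww(3)] by simp
  qed
  then have "slab_arrangement D W (snd G) n m R ctr"
    using n R0 ctr by (simp add: slab_arrangement_def)
  then show ?thesis by (auto simp: W_def V_def)
qed

lemma ball_packable_of_slab_arrangement: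
  assumes arr: "slab_arrangement D (fst G - {h0, h1}) (snd G) n m R c"
    and apex: "apexes G h0 h1" and irrefl: "\<And>v. v \<in> fst G \<Longrightarrow> \<not> snd G v v"
  shows "ball_packable D G"
proof -
  define W where "W = fst G - {h0, h1}"
  have n: "n \<in> euc D" "ip D n n = 1" and R: "R > 0"
    and c: "\<And>w. w \<in> W \<Longrightarrow> c w \<in> euc D \<and> ip D n (c w) = m"
    and cc: "\<And>w w'. w \<in> W \<Longrightarrow> w' \<in> W \<Longrightarrow> w \<noteq> w' \<Longrightarrow>
      4 * R^2 \<le> sqdist D (c w) (c w') \<and> (snd G w w' \<longleftrightarrow> sqdist D (c w) (c w') = 4 * R^2)"
    using arr by (simp_all add: slab_arrangement_def W_def)
  have h: "h0 \<in> fst G" "h1 \<in> fst G" "h0 \<noteq> h1"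
    and hadj: "\<And>u h. u \<in> fst G \<Longrightarrow> h \<in> {h0, h1} \<Longrightarrow> u \<noteq> h \<Longrightarrow> snd G u h \<and> snd G h u"
    using apex by (auto simp: apexes_def)
  define nm where "nm = (\<lambda>i. - n i)"
  have nm: "nm \<in> euc D" "ip D nm nm = 1" using n by (simp_all add: nm_def euc_neg ip_lin)
  define B where "B = (\<lambda>w. if w = h0 then closed_halfspace D n (m + R)
     else if w = h1 then closed_halfspace D nm (R - m) else closed_ball D (c w) R)"
  have B0: "B h0 = closed_halfspace D n (m + R)"
      "ext_interior D (closed_halfspace D n (m + R)) = open_halfspace D n (m + R)"
    and B1: "B h1 = closed_halfspace D nm (R - m)"
      "ext_interior D (closed_halfspace D nm (R - m)) = open_halfspace D nm (R - m)"
    using h n nm closed_halfspace_is_ball by (simp_all add: B_def)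
  have BW: "B w = closed_ball D (c w) R" "ext_interior D (closed_ball D (c w) R) = open_ball D (c w) R"
    if "w \<in> W" for w
    using that c[OF that] R closed_ball_is_ball by (auto simp: B_def W_def)
  have ball: "is_ball D (B w) \<and> ext_interior D (B w) \<noteq> {}" if "w \<in> fst G" for w
  proof -
    have "w = h0 \<or> w = h1 \<or> w \<in> W" using that by (auto simp: W_def)
    then show ?thesis using B0 B1 BW n nm c[of w] R closed_halfspace_is_ball closed_ball_is_ball
        open_halfspace_nonempty open_ball_nonempty by (elim disjE) auto
  qed
  have side: "ext_interior D (B h) \<inter> ext_interior D (B w) = {} \<and> (\<exists>!z. z \<in> B h \<inter> B w)"
    if "h \<in> {h0, h1}" "w \<in> W" for h w
  proof -
    have cw: "c w \<in> euc D" and e: "ip D n (c w) + R = m + R" "ip D nm (c w) + R = R - m"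
      using c[OF that(2)] by (simp_all add: nm_def ip_lin)
    show ?thesis
      using that(1) B0 B1 BW[OF that(2)] ball_tangent_halfspace[OF n cw R e(1)] ball_tangent_halfspace[OF nm cw R e(2)]
      by (auto simp: Int_commute)
  qed
  show ?thesis
  proof (rule ball_packable_of_balls[OF irrefl ball])
    fix u v assume uv: "u \<in> fst G" "v \<in> fst G" "u \<noteq> v"
    consider "u \<in> {h0, h1}" "v \<in> {h0, h1}" | "u \<in> {h0, h1}" "v \<in> W" | "u \<in> W" "v \<in> {h0, h1}" | "u \<in> W" "v \<in> W"
      using uv by (auto simp: W_def)
    then show "ext_interior D (B u) \<inter> ext_interior D (B v) = {} \<and> (snd G u v \<longleftrightarrow> (\<exists>!z. z \<in> B u \<inter> B v))"
    proof cases
      case 1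
      have "m + R + (R - m) > 0" using R by simp
      from opposite_halfspaces_tangent[OF n this] show ?thesis
        using 1 uv B0 B1 hadj[OF uv(1) 1(2)] by (auto simp: nm_def Int_commute)
    next
      case 2 then show ?thesis using side hadj[OF uv(2) 2(1)] uv by blast
    next
      case 3 then show ?thesis using side[OF 3(2,1)] hadj[OF uv(1) 3(2)] uv by (simp add: Int_commute)
    next
      case 4
      then show ?thesis using BW[OF 4(1)] BW[OF 4(2)] cc[OF 4 uv(3)] c[OF 4(1)] c[OF 4(2)] R
          open_balls_disjoint_if_sqdist tangent_balls_iff_sqdist by simp
    qed
  qed
qed

section \<open>Realising a spherical code\<close>

definition ones_block :: "nat \<Rightarrow> nat \<Rightarrow> nat \<Rightarrow> real" where
  "ones_block d \<alpha> = (\<lambda>j. if d \<le> j \<and> j < d + \<alpha> then 1 else 0)"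

lemma ip_ones_block_self: "ip (d + \<alpha>) (ones_block d \<alpha>) (ones_block d \<alpha>) = real \<alpha>"
proof -
  have "ip (d + \<alpha>) (ones_block d \<alpha>) (ones_block d \<alpha>) = (\<Sum>j<d + \<alpha>. if d \<le> j then 1 else 0)"
    unfolding ip_def ones_block_def by (intro sum.cong) auto
  also have "\<dots> = card {j. j < d + \<alpha> \<and> d \<le> j}"
    by (simp add: sum.If_cases Int_def lessThan_def conj_commute)
  also have "{j. j < d + \<alpha> \<and> d \<le> j} = {d..<d + \<alpha>}" by auto
  finally show ?thesis by simp
qed

lemma ip_ones_block_euc: "x \<in> euc d \<Longrightarrow> ip (d + \<alpha>) (ones_block d \<alpha>) x = 0"
  unfolding ip_def ones_block_def euc_def by (intro sum.neutral) auto

lemma ip_ones_block_unit_vec: "i < \<alpha> \<Longrightarrow> ip (d + \<alpha>) (ones_block d \<alpha>) (unit_vec (d + i)) = 1"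
  by (simp add: ip_unit_vec_right ones_block_def)

lemma ip_unit_vec_euc: "x \<in> euc d \<Longrightarrow> ip (d + \<alpha>) (unit_vec (d + i)) x = 0"
  by (simp add: ip_unit_vec_left euc_def)

text \<open>The converse construction: unit balls centred at the vertices of a regular simplex of edge 2
  spanned by the last \<open>\<alpha>\<close> coordinates, and at \<open>g + \<rho> x\<close> for the code points \<open>x\<close>, where \<open>g\<close>
  is the centroid of the simplex and \<open>\<rho>\<^sup>2 = 2(\<alpha>+1)/\<alpha>\<close> makes them touch every simplex ball.\<close>

definition slab_normal :: "nat \<Rightarrow> nat \<Rightarrow> nat \<Rightarrow> real" where
  "slab_normal d \<alpha> = (\<lambda>j. ones_block d \<alpha> j / sqrt (real \<alpha>))"

definition simplex_vertex :: "nat \<Rightarrow> nat \<Rightarrow> nat \<Rightarrow> real" where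
  "simplex_vertex d i = (\<lambda>j. sqrt 2 * unit_vec (d + i) j)"

definition code_centre :: "nat \<Rightarrow> nat \<Rightarrow> (nat \<Rightarrow> real) \<Rightarrow> nat \<Rightarrow> real" where
  "code_centre d \<alpha> x =
     (\<lambda>j. sqrt 2 / real \<alpha> * ones_block d \<alpha> j + sqrt (2 * (real \<alpha> + 1) / real \<alpha>) * x j)"

lemma slab_normal_euc: "slab_normal d \<alpha> \<in> euc (d + \<alpha>)"
  by (auto simp: slab_normal_def ones_block_def euc_def)

lemma ip_slab_normal_self: "\<alpha> \<ge> 1 \<Longrightarrow> ip (d + \<alpha>) (slab_normal d \<alpha>) (slab_normal d \<alpha>) = 1"
  by (simp add: slab_normal_def ip_lin ip_ones_block_self)

lemma simplex_vertex_euc: "i < \<alpha> \<Longrightarrow> simplex_vertex d i \<in> euc (d + \<alpha>)"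
  by (auto simp: simplex_vertex_def unit_vec_def euc_def)

lemma ip_slab_normal_simplex_vertex:
  "i < \<alpha> \<Longrightarrow> ip (d + \<alpha>) (slab_normal d \<alpha>) (simplex_vertex d i) = sqrt 2 / sqrt (real \<alpha>)"
  by (simp add: slab_normal_def simplex_vertex_def ip_lin ip_ones_block_unit_vec)

lemma sqdist_simplex_vertices:
  "i < \<alpha> \<Longrightarrow> j < \<alpha> \<Longrightarrow> i \<noteq> j \<Longrightarrow> sqdist (d + \<alpha>) (simplex_vertex d i) (simplex_vertex d j) = 4"
  by (simp add: sqdist_expand simplex_vertex_def ip_lin ip_unit_vec_unit_vec)

lemma code_centre_euc: "x \<in> euc d \<Longrightarrow> code_centre d \<alpha> x \<in> euc (d + \<alpha>)"
  by (auto simp: code_centre_def ones_block_def euc_def)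

lemma ip_slab_normal_code_centre:
  assumes "\<alpha> \<ge> 1" and "x \<in> euc d"
  shows "ip (d + \<alpha>) (slab_normal d \<alpha>) (code_centre d \<alpha> x) = sqrt 2 / sqrt (real \<alpha>)"
proof -
  have "ip (d + \<alpha>) (slab_normal d \<alpha>) (code_centre d \<alpha> x) = sqrt 2 / real \<alpha> * real \<alpha> / sqrt (real \<alpha>)"
    using assms(2) by (simp add: slab_normal_def code_centre_def ip_lin ip_ones_block_self ip_ones_block_euc)
  then show ?thesis using assms(1) by simp
qed

lemma sqdist_code_centre_simplex_vertex:
  assumes \<alpha>: "\<alpha> \<ge> 1" and x: "x \<in> euc d" "ip d x x = 1" and i: "i < \<alpha>"
  shows "sqdist (d + \<alpha>) (code_centre d \<alpha> x) (simplex_vertex d i) = 4"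
proof -
  define c where "c = sqrt 2 / real \<alpha>"
  define \<rho> where "\<rho> = sqrt (2 * (real \<alpha> + 1) / real \<alpha>)"
  define g where "g = (\<lambda>j. c * ones_block d \<alpha> j)"
  have a0: "real \<alpha> > 0" using \<alpha> by simp
  have y: "code_centre d \<alpha> x = (\<lambda>j. g j + \<rho> * x j)" by (simp add: code_centre_def g_def c_def \<rho>_def)
  have gg: "ip (d + \<alpha>) g g = 2 / real \<alpha>"
    using a0 by (simp add: g_def ip_lin ip_ones_block_self c_def power2_eq_square[symmetric])
  have gx: "ip (d + \<alpha>) g x = 0" "ip (d + \<alpha>) x g = 0"
    using x(1) by (simp_all add: g_def ip_lin ip_ones_block_euc ip_sym[of _ x])
  have xx: "ip (d + \<alpha>) x x = 1" using x ip_eq_if_euc_left[of x d "d + \<alpha>" x] by simp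
  have yy: "ip (d + \<alpha>) (code_centre d \<alpha> x) (code_centre d \<alpha> x) = 2 / real \<alpha> + \<rho> * \<rho>"
    unfolding y by (simp add: ip_lin gg gx xx)
  have yv: "ip (d + \<alpha>) (code_centre d \<alpha> x) (simplex_vertex d i) = 2 / real \<alpha>"
    using x i by (simp add: y g_def c_def simplex_vertex_def ip_lin ip_ones_block_unit_vec
        ip_sym[of _ x "unit_vec (d + i)"] ip_unit_vec_euc)
  have vv: "ip (d + \<alpha>) (simplex_vertex d i) (simplex_vertex d i) = 2"
    using i by (simp add: simplex_vertex_def ip_lin ip_unit_vec_unit_vec)
  have "\<rho> * \<rho> = 2 * (real \<alpha> + 1) / real \<alpha>" using a0 by (simp add: \<rho>_def)
  then show ?thesis unfolding sqdist_expand yy yv vv using a0 by (simp add: field_simps)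
qed

lemma sqdist_code_centres:
  assumes "x \<in> euc d" "z \<in> euc d"
  shows "sqdist (d + \<alpha>) (code_centre d \<alpha> x) (code_centre d \<alpha> z)
    = 2 * (real \<alpha> + 1) / real \<alpha> * (ip d x x - 2 * ip d x z + ip d z z)"
proof -
  define \<rho> where "\<rho> = sqrt (2 * (real \<alpha> + 1) / real \<alpha>)"
  have "(\<lambda>j. code_centre d \<alpha> x j - code_centre d \<alpha> z j) = (\<lambda>j. \<rho> * (x j - z j))"
    by (simp add: code_centre_def \<rho>_def algebra_simps)
  then have "sqdist (d + \<alpha>) (code_centre d \<alpha> x) (code_centre d \<alpha> z)
      = \<rho> * (\<rho> * ip (d + \<alpha>) (\<lambda>j. x j - z j) (\<lambda>j. x j - z j))"
    unfolding sqdist_def by (simp only: ip_scale_left ip_scale_right)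
  also have "ip (d + \<alpha>) (\<lambda>j. x j - z j) (\<lambda>j. x j - z j) = ip d (\<lambda>j. x j - z j) (\<lambda>j. x j - z j)"
    using euc_diff[OF assms] by (rule ip_eq_if_euc_left) simp
  also have "\<rho> * (\<rho> * ip d (\<lambda>j. x j - z j) (\<lambda>j. x j - z j))
      = (\<rho> * \<rho>) * ip d (\<lambda>j. x j - z j) (\<lambda>j. x j - z j)" by (simp only: mult.assoc)
  finally show ?thesis by (simp add: ip_diff_self \<rho>_def)
qed

lemma sqdist_code_centres_ge:
  fixes d \<alpha> :: nat
  assumes \<alpha>: "\<alpha> \<ge> 1" and code: "spherical_code d (arccos (1 / (real \<alpha> + 1))) X"
    and x: "x \<in> X" and z: "z \<in> X" and xz: "x \<noteq> z"
  shows "sqdist (d + \<alpha>) (code_centre d \<alpha> x) (code_centre d \<alpha> z) \<ge> 4 \<and>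
    (sqdist (d + \<alpha>) (code_centre d \<alpha> x) (code_centre d \<alpha> z) = 4
       \<longleftrightarrow> sph_dist d x z = arccos (1 / (real \<alpha> + 1)))"
proof -
  define t where "t = 1 / (real \<alpha> + 1)"
  have t: "0 < t" "t < 1" using arccos_inv_succ_bounds[OF \<alpha>] by (simp_all add: t_def)
  have xs: "x \<in> euc d" "ip d x x = 1" "z \<in> euc d" "ip d z z = 1"
    using code x z by (auto simp: spherical_code_def unit_sphere_def enorm_def)
  have ab: "\<bar>ip d x z\<bar> \<le> 1" using abs_ip_le_sqrt_mult[of d x z] xs by simp
  have "sph_dist d x z \<ge> arccos t" using code x z xz by (simp add: spherical_code_def t_def)
  then have le: "ip d x z \<le> t" using arccos_le_mono[of t "ip d x z"] ab t by (simp add: sph_dist_def)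
  have eq: "sph_dist d x z = arccos t \<longleftrightarrow> ip d x z = t"
    unfolding sph_dist_def by (rule arccos_eq_iff) (use ab t in simp)
  define K where "K = 2 * (real \<alpha> + 1) / real \<alpha>"
  have a0: "real \<alpha> > 0" using \<alpha> by simp
  have e: "2 - 2 * t = 2 * real \<alpha> / (real \<alpha> + 1)" by (simp add: t_def field_simps)
  have K: "K > 0" "K * (2 - 2 * t) = 4"
    using a0 unfolding e by (simp_all add: K_def divide_simps del: of_nat_add)
  have S: "sqdist (d + \<alpha>) (code_centre d \<alpha> x) (code_centre d \<alpha> z) = K * (2 - 2 * ip d x z)"
    using sqdist_code_centres[OF xs(1,3), of \<alpha>] xs by (simp add: K_def)
  have "K * (2 - 2 * t) \<le> K * (2 - 2 * ip d x z)" using le K by (intro mult_left_mono) auto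
  moreover have "K * (2 - 2 * ip d x z) = K * (2 - 2 * t) \<longleftrightarrow> ip d x z = t" using K(1) by simp
  ultimately show ?thesis unfolding S t_def[symmetric] K(2) using eq by blast
qed

section \<open>Packings of the join with a complete graph\<close>

lemma graph_join_complete_simps:
  "fst (graph_join (complete_graph k) G) = Inl ` {..<k} \<union> Inr ` fst G"
  "snd (graph_join (complete_graph k) G) (Inl i) (Inl j) \<longleftrightarrow> i < k \<and> j < k \<and> i \<noteq> j"
  "snd (graph_join (complete_graph k) G) (Inl i) (Inr v) \<longleftrightarrow> i < k \<and> v \<in> fst G"
  "snd (graph_join (complete_graph k) G) (Inr v) (Inl i) \<longleftrightarrow> i < k \<and> v \<in> fst G"
  "snd (graph_join (complete_graph k) G) (Inr v) (Inr w) \<longleftrightarrow> snd G v w"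
  by (auto simp: graph_join_def complete_graph_def)

lemma apexes_graph_join_complete: "apexes (graph_join (complete_graph (2 + \<alpha>)) G) (Inl 0) (Inl 1)"
  by (auto simp: apexes_def graph_join_complete_simps)

lemma spherical_code_of_slab_arrangement:
  fixes d \<alpha> :: nat and G :: "'a graph"
  defines "J \<equiv> graph_join (complete_graph (2 + \<alpha>)) G"
  assumes \<alpha>: "\<alpha> \<ge> 1" and G: "finite_graph G"
    and arr: "slab_arrangement (d + \<alpha>) (fst J - {Inl 0, Inl 1}) (snd J) n m R c"
  shows "\<exists>X. spherical_code d (arccos (1 / (real \<alpha> + 1))) X
            \<and> graph_iso G (min_dist_graph d (arccos (1 / (real \<alpha> + 1))) X)"
proof -
  define W where "W = fst J - {Inl 0, Inl 1}"
  have n: "n \<in> euc (d + \<alpha>)" "ip (d + \<alpha>) n n = 1" and R: "R > 0"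
    and c: "\<And>w. w \<in> W \<Longrightarrow> c w \<in> euc (d + \<alpha>) \<and> ip (d + \<alpha>) n (c w) = m"
    and cc: "\<And>w w'. w \<in> W \<Longrightarrow> w' \<in> W \<Longrightarrow> w \<noteq> w' \<Longrightarrow> 4 * R^2 \<le> sqdist (d + \<alpha>) (c w) (c w')
      \<and> (snd J w w' \<longleftrightarrow> sqdist (d + \<alpha>) (c w) (c w') = 4 * R^2)"
    using arr by (simp_all add: slab_arrangement_def W_def)
  have KW: "\<And>i. i \<in> {2..<\<alpha>+2} \<Longrightarrow> Inl i \<in> W" and GW: "\<And>v. v \<in> fst G \<Longrightarrow> Inr v \<in> W"
    by (auto simp: W_def J_def graph_join_complete_simps)
  have JG: "\<And>v w. snd J (Inr v) (Inr w) \<longleftrightarrow> snd G v w" by (simp add: J_def graph_join_complete_simps)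
  obtain P where P: "\<forall>v\<in>fst G. P v \<in> euc d \<and> (\<forall>w\<in>fst G. ip d (P v) (P w)
      = 1 - sqdist (d + \<alpha>) (c (Inr v)) (c (Inr w)) * real \<alpha> / (4 * R^2 * (real \<alpha> + 1)))"
  proof (rule exE[OF ex_gram_of_simplex_equidistant[OF \<alpha> R n, of "\<lambda>i. c (Inl i)" m "fst G" "\<lambda>v. c (Inr v)"]])
    show "\<forall>i\<in>{2..<\<alpha>+2}. c (Inl i) \<in> euc (d + \<alpha>) \<and> ip (d + \<alpha>) n (c (Inl i)) = m"
      "\<forall>v\<in>fst G. c (Inr v) \<in> euc (d + \<alpha>) \<and> ip (d + \<alpha>) n (c (Inr v)) = m"
      using c KW GW by simp_all
    show "\<forall>i\<in>{2..<\<alpha>+2}. \<forall>j\<in>{2..<\<alpha>+2}. i \<noteq> j \<longrightarrow> sqdist (d + \<alpha>) (c (Inl i)) (c (Inl j)) = 4 * R^2"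
      using cc[OF KW KW] by (auto simp: J_def graph_join_complete_simps)
    show "\<forall>v\<in>fst G. \<forall>i\<in>{2..<\<alpha>+2}. sqdist (d + \<alpha>) (c (Inr v)) (c (Inl i)) = 4 * R^2"
      using cc[OF GW KW] by (auto simp: J_def graph_join_complete_simps)
  qed
  show ?thesis
  proof (rule spherical_code_of_gram[OF \<alpha> G R P])
    show "\<forall>v\<in>fst G. \<forall>w\<in>fst G. v \<noteq> w \<longrightarrow> 4 * R^2 \<le> sqdist (d + \<alpha>) (c (Inr v)) (c (Inr w)) \<and>
       (snd G v w \<longleftrightarrow> sqdist (d + \<alpha>) (c (Inr v)) (c (Inr w)) = 4 * R^2)"
      using cc[OF GW GW] JG by simp
  qed simp
qed

lemma slab_arrangement_of_spherical_code:
  fixes d \<alpha> :: nat and G :: "'a graph"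
  defines "J \<equiv> graph_join (complete_graph (2 + \<alpha>)) G"
  assumes \<alpha>: "\<alpha> \<ge> 1"
    and code: "spherical_code d (arccos (1 / (real \<alpha> + 1))) X"
    and iso: "graph_iso G (min_dist_graph d (arccos (1 / (real \<alpha> + 1))) X)"
  shows "\<exists>c. slab_arrangement (d + \<alpha>) (fst J - {Inl 0, Inl 1}) (snd J)
    (slab_normal d \<alpha>) (sqrt 2 / sqrt (real \<alpha>)) 1 c"
proof -
  define W where "W = fst J - {Inl 0, Inl 1}"
  have W: "W = Inl ` {2..<2 + \<alpha>} \<union> Inr ` fst G" by (auto simp: W_def J_def graph_join_complete_simps)
  have adj: "\<And>i j. snd J (Inl i) (Inl j) \<longleftrightarrow> i < 2 + \<alpha> \<and> j < 2 + \<alpha> \<and> i \<noteq> j"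
    "\<And>i v. snd J (Inl i) (Inr v) \<longleftrightarrow> i < 2 + \<alpha> \<and> v \<in> fst G"
    "\<And>i v. snd J (Inr v) (Inl i) \<longleftrightarrow> i < 2 + \<alpha> \<and> v \<in> fst G"
    "\<And>v w. snd J (Inr v) (Inr w) \<longleftrightarrow> snd G v w"
    by (simp_all add: J_def graph_join_complete_simps)
  obtain f where bij: "bij_betw f (fst G) X"
    and fadj: "\<forall>u\<in>fst G. \<forall>v\<in>fst G. snd G u v
      \<longleftrightarrow> snd (min_dist_graph d (arccos (1 / (real \<alpha> + 1))) X) (f u) (f v)"
    using iso by (auto simp: graph_iso_def min_dist_graph_def)
  have fX: "\<And>v. v \<in> fst G \<Longrightarrow> f v \<in> X" using bij by (auto simp: bij_betw_def)
  have Xe: "\<And>x. x \<in> X \<Longrightarrow> x \<in> euc d \<and> ip d x x = 1"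
    using code by (auto simp: spherical_code_def unit_sphere_def enorm_def)
  define c where "c = (\<lambda>w. case w of Inl i \<Rightarrow> simplex_vertex d (i - 2) | Inr v \<Rightarrow> code_centre d \<alpha> (f v))"
  have on_plane: "c w \<in> euc (d + \<alpha>) \<and> ip (d + \<alpha>) (slab_normal d \<alpha>) (c w) = sqrt 2 / sqrt (real \<alpha>)"
    if "w \<in> W" for w
    using that fX Xe simplex_vertex_euc ip_slab_normal_simplex_vertex code_centre_euc
      ip_slab_normal_code_centre[OF \<alpha>] by (auto simp: W c_def)
  have "4 * 1^2 \<le> sqdist (d + \<alpha>) (c w) (c w') \<and> (snd J w w' \<longleftrightarrow> sqdist (d + \<alpha>) (c w) (c w') = 4 * 1^2)"
    if ww: "w \<in> W" "w' \<in> W" "w \<noteq> w'" for w w'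
  proof -
    consider i j where "w = Inl i" "w' = Inl j" "2 \<le> i" "i < 2 + \<alpha>" "2 \<le> j" "j < 2 + \<alpha>" "i \<noteq> j"
      | i v where "w = Inl i" "w' = Inr v" "2 \<le> i" "i < 2 + \<alpha>" "v \<in> fst G"
      | i v where "w = Inr v" "w' = Inl i" "2 \<le> i" "i < 2 + \<alpha>" "v \<in> fst G"
      | u v where "w = Inr u" "w' = Inr v" "u \<in> fst G" "v \<in> fst G" "u \<noteq> v"
      using ww unfolding W by (elim UnE imageE) force+
    then show ?thesis
    proof cases
      case 1
      then show ?thesis using sqdist_simplex_vertices[of "i - 2" \<alpha> "j - 2" d] by (simp add: c_def adj)
    next
      case 2
      then show ?thesis using sqdist_code_centre_simplex_vertex[OF \<alpha>, of "f v" d "i - 2"] fX Xe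
        by (simp add: c_def adj sqdist_commute)
    next
      case 3
      then show ?thesis using sqdist_code_centre_simplex_vertex[OF \<alpha>, of "f v" d "i - 2"] fX Xe
        by (simp add: c_def adj)
    next
      case 4
      have "f u \<noteq> f v" using bij 4 by (auto simp: bij_betw_def inj_on_eq_iff)
      then show ?thesis using 4 fadj fX sqdist_code_centres_ge[OF \<alpha> code fX fX]
        by (simp add: c_def adj min_dist_graph_def)
    qed
  qed
  then show ?thesis
    using on_plane slab_normal_euc ip_slab_normal_self[OF \<alpha>] by (auto simp: slab_arrangement_def W_def)
qed

theorem corollary3p6:
  fixes d \<alpha> :: nat and G :: "'a graph"
  assumes "d \<ge> 1" and "\<alpha> \<ge> 1" and "finite_graph G"
  shows "ball_packable (d + \<alpha>) (graph_join (complete_graph (2 + \<alpha>)) G)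
     \<longleftrightarrow> (\<exists>X. spherical_code d (arccos (1 / (real \<alpha> + 1))) X
            \<and> graph_iso G (min_dist_graph d (arccos (1 / (real \<alpha> + 1))) X))"
proof
  assume "ball_packable (d + \<alpha>) (graph_join (complete_graph (2 + \<alpha>)) G)"
  then obtain n m R c where "slab_arrangement (d + \<alpha>)
      (fst (graph_join (complete_graph (2 + \<alpha>)) G) - {Inl 0, Inl 1}) (snd (graph_join (complete_graph (2 + \<alpha>)) G)) n m R c"
    using ex_slab_arrangement_of_ball_packable[OF _ apexes_graph_join_complete] by blast
  then show "\<exists>X. spherical_code d (arccos (1 / (real \<alpha> + 1))) X
            \<and> graph_iso G (min_dist_graph d (arccos (1 / (real \<alpha> + 1))) X)"
    using spherical_code_of_slab_arrangement assms(2,3) by blast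
next
  assume "\<exists>X. spherical_code d (arccos (1 / (real \<alpha> + 1))) X
            \<and> graph_iso G (min_dist_graph d (arccos (1 / (real \<alpha> + 1))) X)"
  then obtain c where "slab_arrangement (d + \<alpha>)
      (fst (graph_join (complete_graph (2 + \<alpha>)) G) - {Inl 0, Inl 1}) (snd (graph_join (complete_graph (2 + \<alpha>)) G))
      (slab_normal d \<alpha>) (sqrt 2 / sqrt (real \<alpha>)) 1 c"
    using slab_arrangement_of_spherical_code assms(2) by blast
  moreover have "\<not> snd (graph_join (complete_graph (2 + \<alpha>)) G) v v" for v
    using assms(3) by (cases v) (auto simp: graph_join_complete_simps finite_graph_def)
  ultimately show "ball_packable (d + \<alpha>) (graph_join (complete_graph (2 + \<alpha>)) G)"
    using ball_packable_of_slab_arrangement[OF _ apexes_graph_join_complete] by blast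
qed

end
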